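(* In the setting described in the context, assume that the unforced system $(X,\mathrm{PC},\phi_0)$ is UGES. Then for every $1\le p\le+\infty$ and $\sigma\in\mathrm{PC}$ the input-to-state map $u\mapsto\phi_u(\cdot,0,\sigma)$ is well defined from $L^p(\mathbb{R}_+,U)$ to $L^p(\mathbb{R}_+,X)$, and there exists $c_p>0$ (independent of $\sigma$) such that $$\|\phi_u(\cdot,0,\sigma)\|_{L^p(\mathbb{R}_+,X)}\le c_p\|u\|_{L^p(\mathbb{R}_+,U)}\quad\forall u\in L^p(\mathbb{R}_+,U),\ \forall\sigma\in\mathrm{PC}.$$
   Context: $X,U$ are Banach spaces; $A$ is the infinitesimal generator of a $C_0$-semigroup $(T_t)_{t\ge0}$ of bounded linear operators on $X$. $\mathcal{Q}$ is a nonempty set and $\mathrm{PC}$ is the set of piecewise constant $\sigma:\mathbb{R}_+\to\mathcal{Q}$. For $q\in\mathcal{Q}$, $f_q:X\times U\to X$ is Lipschitz continuous with Lipschitz constant $L_f>0$ independent of $q$, and $f_q(0,0)=0$. For $x_0\in X$, $\sigma\in\mathrm{PC}$ and $u\in L^p(\mathbb{R}_+,U)$, $\phi_u(\cdot,x_0,\sigma)$ denotes the (mild) solution on $\mathbb{R}_+$ of $\dot x(t)=Ax(t)+f_{\sigma(t)}(x(t),u(t))$, $x(0)=x_0$, i.e. the continuous function with $\phi_u(t,x_0,\sigma)=T_tx_0+\int_0^tT_{t-s}f_{\sigma(s)}(\phi_u(s,x_0,\sigma),u(s))ds$; $\phi_0$ denotes the case $u\equiv0$. $(X,\mathrm{PC},\phi_0)$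 is UGES if there exist $M,\lambda>0$ with $\|\phi_0(t,x,\sigma)\|\le Me^{-\lambda t}\|x\|$ for all $t\ge0$, $x\in X$, $\sigma\in\mathrm{PC}$. *)

theory Defs
  imports "HOL-Analysis.Analysis" "HOL-Probability.Essential_Supremum"
begin

text \<open>C0-semigroup of bounded linear operators on a Banach space (the generator A is
  determined by T and plays no further role in the statement).\<close>
definition C0_semigroup :: "(real \<Rightarrow> ('x::banach \<Rightarrow>\<^sub>L 'x)) \<Rightarrow> bool" where
  "C0_semigroup T \<longleftrightarrow>
     T 0 = id_blinfun \<and>
     (\<forall>t s. 0 \<le> t \<longrightarrow> 0 \<le> s \<longrightarrow> T (t + s) = T t o\<^sub>L T s) \<and>
     (\<forall>x. ((\<lambda>t. blinfun_apply (T t) x) \<longlongrightarrow> x) (at_right 0))"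

definition piecewise_constant :: "(real \<Rightarrow> 'q) \<Rightarrow> bool" where
  "piecewise_constant \<sigma> \<longleftrightarrow>
     (\<exists>S. S \<subseteq> {0..} \<and> (\<forall>b. finite (S \<inter> {0..b})) \<and>
          (\<forall>a b. 0 \<le> a \<longrightarrow> a < b \<longrightarrow> S \<inter> {a<..<b} = {} \<longrightarrow>
                 (\<forall>s\<in>{a<..<b}. \<forall>t\<in>{a<..<b}. \<sigma> s = \<sigma> t)))"

definition PC :: "(real \<Rightarrow> 'q) set" where
  "PC = {\<sigma>. piecewise_constant \<sigma>}"

definition Lp_norm :: "ennreal \<Rightarrow> (real \<Rightarrow> 'a::real_normed_vector) \<Rightarrow> ennreal" where
  "Lp_norm p f =
     (if p = \<infinity> then esssup (lebesgue_on {0..}) (\<lambda>t. ennreal (norm (f t)))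
      else (let I = (\<integral>\<^sup>+ t. ennreal (norm (f t) powr enn2real p) \<partial>lebesgue_on {0..})
            in if I = \<infinity> then \<infinity> else ennreal (enn2real I powr (1 / enn2real p))))"

definition Lp :: "ennreal \<Rightarrow> (real \<Rightarrow> 'a::real_normed_vector) set" where
  "Lp p = {f. f \<in> borel_measurable (lebesgue_on {0..}) \<and> Lp_norm p f < \<infinity>}"

text \<open>Mild solution on R_+ of x' = A x + f_{\<sigma>(t)}(x, u(t)), x(0) = x0.\<close>
definition mild_solution ::
  "(real \<Rightarrow> ('x::banach \<Rightarrow>\<^sub>L 'x)) \<Rightarrow> ('q \<Rightarrow> 'x \<Rightarrow> 'u \<Rightarrow> 'x) \<Rightarrow>
   (real \<Rightarrow> 'q) \<Rightarrow> (real \<Rightarrow> 'u) \<Rightarrow> 'x \<Rightarrow> (real \<Rightarrow> 'x) \<Rightarrow> bool" where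
  "mild_solution T f \<sigma> u x0 \<phi> \<longleftrightarrow>
     continuous_on {0..} \<phi> \<and>
     (\<forall>t\<ge>0. ((\<lambda>s. blinfun_apply (T (t - s)) (f (\<sigma> s) (\<phi> s) (u s)))
               has_integral (\<phi> t - blinfun_apply (T t) x0)) {0..t})"

definition UGES :: "(real \<Rightarrow> ('x::banach \<Rightarrow>\<^sub>L 'x)) \<Rightarrow> ('q \<Rightarrow> 'x \<Rightarrow> 'u::real_normed_vector \<Rightarrow> 'x) \<Rightarrow> bool" where
  "UGES T f \<longleftrightarrow>
     (\<exists>M lam. M > 0 \<and> lam > 0 \<and>
        (\<forall>\<sigma>\<in>PC. \<forall>x \<phi>. mild_solution T f \<sigma> (\<lambda>_. 0) x \<phi> \<longrightarrow>
            (\<forall>t\<ge>0. norm (\<phi> t) \<le> M * exp (- lam * t) * norm x)))"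

end

theory Submission
  imports Defs
begin

text \<open>
  A \<open>C\<^sub>0\<close>-semigroup grows at most exponentially, \<open>\<parallel>T t\<parallel> \<le> K exp (\<omega> t)\<close>, by the uniform
  boundedness principle. By UGES fix a time step \<open>h\<close> with \<open>M exp (-\<lambda> h) \<le> 1/2\<close>. On the block
  \<open>[n h, n h + h]\<close> compare the forced solution \<open>\<phi>\<close> with the unforced solution started from \<open>\<phi> (n h)\<close>
  (which exists by a fixed point argument in an exponentially weighted sup norm); Gronwall's
  inequality bounds their distance by \<open>C b\<^sub>n\<close>, where \<open>b\<^sub>n\<close> is the integral of \<open>\<parallel>u\<parallel>\<close> over the block.
  Hence \<open>\<parallel>\<phi> (n h)\<parallel> \<le> C e\<^sub>n\<close> with \<open>e\<^sub>0 = 0\<close>, \<open>e\<^sub>n\<^sub>+\<^sub>1 = e\<^sub>n / 2 + b\<^sub>n\<close>, and \<open>\<parallel>\<phi>\<parallel>\<close> is bounded by a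
  multiple of \<open>e\<^sub>n\<^sub>+\<^sub>1\<close> on the whole block. For \<open>p = \<infinity>\<close> use \<open>e\<^sub>n \<le> 2 sup b\<close>; for finite \<open>p\<close>,
  convexity gives \<open>\<Sum> e\<^sub>n\<^sub>+\<^sub>1\<^sup>p \<le> 2\<^sup>p \<Sum> b\<^sub>n\<^sup>p\<close> and Jensen gives \<open>b\<^sub>n\<^sup>p \<le> h\<^sup>p\<^sup>-\<^sup>1\<close> times the integral of
  \<open>\<parallel>u\<parallel>\<^sup>p\<close> over the block.
\<close>

section \<open>Uniform boundedness and growth of semigroups\<close>

lemma norm_blinfun_le_of_bounded_on_ball:
  fixes A :: "'a::real_normed_vector \<Rightarrow>\<^sub>L 'b::real_normed_vector"
  assumes r: "r > 0" and bound: "\<And>y. y \<in> ball x0 r \<Longrightarrow> norm (A y) \<le> k"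
  shows "norm A \<le> 4 * k / r"
proof (rule norm_blinfun_bound)
  have k: "0 \<le> k" using bound[of x0] r by (auto intro: order_trans[OF norm_ge_zero])
  then show "0 \<le> 4 * k / r" using r by simp
  fix x :: 'a
  show "norm (A x) \<le> 4 * k / r * norm x"
  proof (cases "x = 0")
    case False
    define c where "c = r / (2 * norm x)"
    have c: "c > 0" "norm (c *\<^sub>R x) = r / 2" using False r by (auto simp: c_def)
    then have "x0 + c *\<^sub>R x \<in> ball x0 r" "x0 \<in> ball x0 r" using r by (auto simp: dist_norm)
    then have "norm (A (x0 + c *\<^sub>R x)) \<le> k" "norm (A x0) \<le> k" by (auto intro: bound)
    moreover have "c *\<^sub>R A x = A (x0 + c *\<^sub>R x) - A x0" by (simp add: blinfun.bilinear_simps)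
    ultimately have "c * norm (A x) \<le> 2 * k" by (metis norm_scaleR norm_triangle_ineq4 c(1)
          abs_of_pos order_trans add_mono mult_2)
    then show ?thesis using False r by (simp add: c_def field_simps)
  qed simp
qed

theorem uniform_boundedness_principle:
  fixes A :: "'i \<Rightarrow> ('a::banach \<Rightarrow>\<^sub>L 'b::real_normed_vector)"
  assumes pointwise: "\<And>x. bounded (range (\<lambda>i. A i x))"
  shows "bounded (range A)"
proof -
  define E where "E k = {x. \<forall>i. norm (A i x) \<le> real k}" for k :: nat
  have closed_E: "closed (E k)" for k
    unfolding E_def Collect_all_eq by (intro closed_INT ballI closed_Collect_le continuous_intros)
  have "\<Union>(range E) = UNIV"
  proof safe
    fix x :: 'a
    obtain B where "\<forall>i. norm (A i x) \<le> B" using pointwise[of x] by (auto simp: bounded_iff)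
    moreover obtain k :: nat where "B \<le> real k" using real_arch_simple by blast
    ultimately show "x \<in> \<Union>(range E)" unfolding E_def by (auto intro: order_trans)
  qed simp
  then obtain k where "interior (E k) \<noteq> {}"
    using Baire_category_alt[of euclidean "range E"] closed_E
    by (force simp: completely_metrizable_space_euclidean)
  then obtain x0 r where "r > 0" "ball x0 r \<subseteq> E k"
    by (metis equals0I open_contains_ball open_interior interior_subset subset_trans)
  then have "norm (A i) \<le> 4 * real k / r" for i
    by (intro norm_blinfun_le_of_bounded_on_ball) (auto simp: E_def)
  then show ?thesis by (auto simp: bounded_iff)
qed

lemma C0_semigroup_zero: "C0_semigroup T \<Longrightarrow> T 0 = id_blinfun"
  by (simp add: C0_semigroup_def)

lemma C0_semigroup_add: "C0_semigroup T \<Longrightarrow> 0 \<le> t \<Longrightarrow> 0 \<le> s \<Longrightarrow> T (t + s) = T t o\<^sub>L T s"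
  by (simp add: C0_semigroup_def)

lemma C0_semigroup_continuous_at_0:
  assumes "C0_semigroup T"
  shows "continuous (at 0 within {0..}) (\<lambda>t. T t x)"
  using assms by (simp add: continuous_within at_within_Ici_at_right C0_semigroup_def)

lemma C0_semigroup_locally_bounded:
  assumes sg: "C0_semigroup T"
  shows "\<exists>d>0. \<exists>B. \<forall>t\<in>{0..d}. norm (T t) \<le> B"
proof (rule ccontr)
  assume "\<not> ?thesis"
  then have "\<forall>n::nat. \<exists>t\<in>{0..inverse (real (Suc n))}. norm (T t) > real n"
    by (metis not_le of_nat_0_less_iff positive_imp_inverse_positive zero_less_Suc)
  then obtain t where t: "\<And>n. t n \<in> {0..inverse (real (Suc n))}" "\<And>n. norm (T (t n)) > real n"
    by metis
  have "t \<longlonglongrightarrow> 0"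
    using t(1) by (intro tendsto_sandwich[OF _ _ tendsto_const LIMSEQ_inverse_real_of_nat]) auto
  then have "(\<lambda>n. T (t n) x) \<longlonglongrightarrow> T 0 x" for x
    using t(1) by (intro continuous_within_tendsto_compose'[OF C0_semigroup_continuous_at_0[OF sg]])
      auto
  then have "bounded (range (\<lambda>n. T (t n)))"
    by (intro uniform_boundedness_principle) (auto intro: convergent_imp_bounded)
  then obtain B where "\<And>n. norm (T (t n)) \<le> B" by (auto simp: bounded_iff)
  moreover obtain n :: nat where "B < real n" using reals_Archimedean2 by blast
  ultimately show False using t(2)[of n] by (meson less_trans not_le)
qed

lemma C0_semigroup_norm_le_power:
  assumes sg: "C0_semigroup T" and K: "K \<ge> 1" and d: "d > 0"
    and K_bound: "\<And>t. t \<in> {0..d} \<Longrightarrow> norm (T t) \<le> K"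
  shows "0 \<le> t \<Longrightarrow> t \<le> real (Suc n) * d \<Longrightarrow> norm (T t) \<le> K ^ Suc n"
proof (induction n arbitrary: t)
  case (Suc n)
  show ?case
  proof (cases "t \<le> d")
    case True
    then have "norm (T t) \<le> K" using Suc.prems by (intro K_bound) auto
    also have "\<dots> \<le> K ^ Suc (Suc n)" using K power_increasing[of 1 "Suc (Suc n)" K] by simp
    finally show ?thesis .
  next
    case False
    have "T t = T d o\<^sub>L T (t - d)" using C0_semigroup_add[OF sg, of d "t - d"] False d by simp
    then have "norm (T t) \<le> norm (T d) * norm (T (t - d))" by (simp add: norm_blinfun_compose)
    also have "\<dots> \<le> K * K ^ Suc n"
      using False d Suc K by (intro mult_mono K_bound Suc.IH) (auto simp: algebra_simps)
    finally show ?thesis by simp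
  qed
qed (use K_bound in auto)

lemma C0_semigroup_exp_bound:
  assumes sg: "C0_semigroup T"
  shows "\<exists>K \<omega>. K \<ge> 1 \<and> \<omega> \<ge> 0 \<and> (\<forall>t\<ge>0. norm (T t) \<le> K * exp (\<omega> * t))"
proof -
  obtain d B where d: "d > 0" and B: "\<And>t. t \<in> {0..d} \<Longrightarrow> norm (T t) \<le> B"
    using C0_semigroup_locally_bounded[OF sg] by blast
  define K where "K = max 1 B"
  have K: "K \<ge> 1" and K_bound: "\<And>t. t \<in> {0..d} \<Longrightarrow> norm (T t) \<le> K"
    using B by (fastforce simp: K_def le_max_iff_disj)+
  define \<omega> where "\<omega> = ln K / d"
  have "norm (T t) \<le> K * exp (\<omega> * t)" if t: "t \<ge> 0" for t
  proof -
    define n where "n = nat \<lfloor>t / d\<rfloor>"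
    have n: "real n \<le> t / d" "t / d < real n + 1" using t d by (auto simp: n_def)
    then have "norm (T t) \<le> K ^ Suc n"
      using d t by (intro C0_semigroup_norm_le_power[OF sg K d K_bound]) (auto simp: field_simps)
    also have "\<dots> = K * exp (real n * ln K)" using K by (simp add: exp_of_nat_mult)
    also have "\<dots> \<le> K * exp (\<omega> * t)"
    proof -
      have "real n * ln K \<le> t / d * ln K" using n K by (intro mult_right_mono) auto
      then show ?thesis using K d by (simp add: \<omega>_def mult.commute)
    qed
    finally show ?thesis .
  qed
  moreover have "\<omega> \<ge> 0" using K d by (simp add: \<omega>_def)
  ultimately show ?thesis using K by blast
qed

locale exp_bounded_semigroup =
  fixes T :: "real \<Rightarrow> ('x::banach \<Rightarrow>\<^sub>L 'x)" and K \<omega> :: real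
  assumes C0: "C0_semigroup T" and K_ge_1: "K \<ge> 1" and \<omega>_nonneg: "\<omega> \<ge> 0"
    and norm_T_le: "\<And>t. 0 \<le> t \<Longrightarrow> norm (T t) \<le> K * exp (\<omega> * t)"
begin

lemma norm_T_apply_le: "0 \<le> t \<Longrightarrow> t \<le> N \<Longrightarrow> norm (T t y) \<le> K * exp (\<omega> * N) * norm y"
proof -
  assume t: "0 \<le> t" "t \<le> N"
  have "norm (T t) \<le> K * exp (\<omega> * N)"
  proof -
    have "exp (\<omega> * t) \<le> exp (\<omega> * N)" using t \<omega>_nonneg by (simp add: mult_left_mono)
    then show ?thesis using norm_T_le[OF t(1)] K_ge_1 by (smt (verit) mult_left_mono)
  qed
  then show ?thesis by (meson norm_blinfun mult_right_mono norm_ge_zero order_trans)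
qed

lemma T_add_apply: "0 \<le> t \<Longrightarrow> 0 \<le> s \<Longrightarrow> T (t + s) y = T t (T s y)"
  using C0_semigroup_add[OF C0, of t s] by simp

lemma T_zero_apply [simp]: "T 0 y = y"
  using C0_semigroup_zero[OF C0] by simp

lemma norm_T_apply_diff_le:
  assumes "0 \<le> t" "0 \<le> t0"
  shows "norm (T t x - T t0 x) \<le> K * exp (\<omega> * t0) * norm (T \<bar>t - t0\<bar> x - x)"
proof (cases "t0 \<le> t")
  case True
  then have "T t x - T t0 x = T t0 (T \<bar>t - t0\<bar> x - x)"
    using T_add_apply[of t0 "t - t0" x] assms by (simp add: blinfun.diff_right)
  then show ?thesis using assms by (simp add: norm_T_apply_le)
next
  case False
  then have "T t x - T t0 x = - T t (T \<bar>t - t0\<bar> x - x)"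
    using T_add_apply[of t "t0 - t" x] assms by (simp add: blinfun.diff_right)
  then show ?thesis using assms False by (simp add: norm_T_apply_le)
qed

lemma continuous_on_T_apply: "continuous_on {0..} (\<lambda>t. T t x)"
  unfolding continuous_on_eq_continuous_within
proof
  fix t0 :: real assume t0: "t0 \<in> {0..}"
  have "((\<lambda>t. \<bar>t - t0\<bar>) \<longlongrightarrow> 0) (at t0 within {0..})"
    by (auto intro!: tendsto_eq_intros)
  then have "((\<lambda>t. T \<bar>t - t0\<bar> x) \<longlongrightarrow> T 0 x) (at t0 within {0..})"
    by (intro continuous_within_tendsto_compose'[OF C0_semigroup_continuous_at_0[OF C0]]) auto
  then have "((\<lambda>t. T \<bar>t - t0\<bar> x - x) \<longlongrightarrow> 0) (at t0 within {0..})"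
    by (simp add: LIM_zero)
  then have "((\<lambda>t. K * exp (\<omega> * t0) * norm (T \<bar>t - t0\<bar> x - x)) \<longlongrightarrow> 0) (at t0 within {0..})"
    by (intro tendsto_mult_right_zero tendsto_norm_zero)
  moreover have "\<forall>\<^sub>F t in at t0 within {0..}.
      norm (T t x - T t0 x) \<le> K * exp (\<omega> * t0) * norm (T \<bar>t - t0\<bar> x - x)"
    using t0 unfolding eventually_at_filter by (intro always_eventually) (auto intro: norm_T_apply_diff_le)
  ultimately have "((\<lambda>t. T t x - T t0 x) \<longlongrightarrow> 0) (at t0 within {0..})"
    by (rule Lim_null_comparison[rotated])
  then show "continuous (at t0 within {0..}) (\<lambda>t. T t x)"
    by (simp add: continuous_within LIM_zero_iff)
qed

lemma continuous_on_T_apply_compose: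
  assumes a: "continuous_on A a" "\<And>s. s \<in> A \<Longrightarrow> 0 \<le> a s" and v: "continuous_on A v"
  shows "continuous_on A (\<lambda>s. T (a s) (v s))"
  unfolding continuous_on_def
proof
  fix s0 assume s0: "s0 \<in> A"
  let ?F = "at s0 within A"
  have "continuous_on A (\<lambda>s. T (a s) (v s0))"
    using a by (intro continuous_on_compose2[OF continuous_on_T_apply]) auto
  then have "((\<lambda>s. T (a s) (v s0)) \<longlongrightarrow> T (a s0) (v s0)) ?F"
    using s0 by (simp add: continuous_on_def)
  moreover have "((\<lambda>s. T (a s) (v s - v s0)) \<longlongrightarrow> 0) ?F"
  proof (rule Lim_null_comparison)
    show "\<forall>\<^sub>F s in ?F. norm (T (a s) (v s - v s0)) \<le> K * exp (\<omega> * a s) * norm (v s - v s0)"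
      using a(2) unfolding eventually_at_filter by (intro always_eventually) (auto intro: norm_T_apply_le)
    have "(a \<longlongrightarrow> a s0) ?F" "(v \<longlongrightarrow> v s0) ?F"
      using a v s0 by (auto simp: continuous_on_def)
    then show "((\<lambda>s. K * exp (\<omega> * a s) * norm (v s - v s0)) \<longlongrightarrow> 0) ?F"
      by (auto intro!: tendsto_eq_intros)
  qed
  ultimately have "((\<lambda>s. T (a s) (v s - v s0) + T (a s) (v s0)) \<longlongrightarrow> 0 + T (a s0) (v s0)) ?F"
    by (intro tendsto_add)
  then show "((\<lambda>s. T (a s) (v s)) \<longlongrightarrow> T (a s0) (v s0)) ?F"
    by (simp add: blinfun.diff_right)
qed

lemma has_integral_convolution_split:
  assumes t0: "0 \<le> t0" "t0 \<le> t"
    and I: "((\<lambda>s. T (t - s) (G s)) has_integral I) {0..t}"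
    and I0: "((\<lambda>s. T (t0 - s) (G s)) has_integral I0) {0..t0}"
  shows "((\<lambda>s. T (t - s) (G s)) has_integral (I - T (t - t0) I0)) {t0..t}"
proof -
  obtain J where J: "((\<lambda>s. T (t - s) (G s)) has_integral J) {t0..t}"
    using integrable_subinterval_real[OF has_integral_integrable[OF I], of t0 t] t0 by auto
  have "((\<lambda>s. T (t - t0) (T (t0 - s) (G s))) has_integral T (t - t0) I0) {0..t0}"
    using has_integral_linear[OF I0 blinfun.bounded_linear_right] by (simp add: o_def)
  then have "((\<lambda>s. T (t - s) (G s)) has_integral T (t - t0) I0) {0..t0}"
  proof (rule has_integral_eq[rotated])
    fix s assume "s \<in> {0..t0}"
    then show "T (t - t0) (T (t0 - s) (G s)) = T (t - s) (G s)"
      using T_add_apply[of "t - t0" "t0 - s"] t0 by simp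
  qed
  from has_integral_combine[OF t0 this J] have "I = T (t - t0) I0 + J"
    using I by (rule has_integral_unique[rotated])
  then show ?thesis using J by (simp add: algebra_simps)
qed

lemma norm_integral_convolution_le:
  assumes t: "0 \<le> t0" "t0 \<le> t" "t \<le> N" and B: "\<And>s. s \<in> {t0..t} \<Longrightarrow> norm (G s) \<le> B"
    and int: "(\<lambda>s. T (t - s) (G s)) integrable_on {t0..t}"
  shows "norm (integral {t0..t} (\<lambda>s. T (t - s) (G s))) \<le> K * exp (\<omega> * N) * B * (t - t0)"
proof -
  have "norm (G t0) \<le> B" using B t by simp
  then have "0 \<le> B" by (rule order_trans[OF norm_ge_zero])
  have "norm (T (t - s) (G s)) \<le> K * exp (\<omega> * N) * B" if "s \<in> {t0..t}" for s
  proof -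
    have "norm (T (t - s) (G s)) \<le> K * exp (\<omega> * N) * norm (G s)"
      using that t by (intro norm_T_apply_le) auto
    also have "\<dots> \<le> K * exp (\<omega> * N) * B"
      using B[OF that] K_ge_1 by (intro mult_left_mono) simp_all
    finally show ?thesis .
  qed
  then have "norm (integral {t0..t} (\<lambda>s. T (t - s) (G s)))
      \<le> K * exp (\<omega> * N) * B * Henstock_Kurzweil_Integration.content {t0..t}"
    using \<open>0 \<le> B\<close> K_ge_1
    by (intro has_integral_bound_real[OF _ finite.emptyI integrable_integral[OF int]]) auto
  then show ?thesis using t by simp
qed

lemma norm_convolution_diff_le:
  fixes G :: "real \<Rightarrow> 'x"
  defines "\<Gamma> \<equiv> \<lambda>t. integral {0..t} (\<lambda>s. T (t - s) (G s))"
  assumes int: "\<And>t. 0 \<le> t \<Longrightarrow> (\<lambda>s. T (t - s) (G s)) integrable_on {0..t}"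
    and B: "\<And>s. s \<in> {0..N} \<Longrightarrow> norm (G s) \<le> B"
    and t: "0 \<le> t0" "t0 \<le> t" "t0 \<le> t'" "t \<le> N" "t' \<le> N"
  shows "norm (\<Gamma> t' - \<Gamma> t) \<le> norm (T (t' - t0) (\<Gamma> t0) - T (t - t0) (\<Gamma> t0))
           + K * exp (\<omega> * N) * B * ((t' - t0) + (t - t0))"
proof -
  define R where "R r = integral {t0..r} (\<lambda>s. T (r - s) (G s))" for r
  have split: "\<Gamma> r = T (r - t0) (\<Gamma> t0) + R r" if "t0 \<le> r" for r
  proof -
    have "((\<lambda>s. T (r - s) (G s)) has_integral (\<Gamma> r - T (r - t0) (\<Gamma> t0))) {t0..r}"
      unfolding \<Gamma>_def using that t by (intro has_integral_convolution_split integrable_integral int) auto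
    then show ?thesis by (simp add: R_def integral_unique)
  qed
  have tail: "norm (R r) \<le> K * exp (\<omega> * N) * B * (r - t0)" if "t0 \<le> r" "r \<le> N" for r
    unfolding R_def using that t integrable_subinterval_real[OF int[of r], of t0 r]
    by (intro norm_integral_convolution_le B) auto
  have "\<Gamma> t' - \<Gamma> t = (T (t' - t0) (\<Gamma> t0) - T (t - t0) (\<Gamma> t0)) + (R t' - R t)"
    using split[of t] split[of t'] t by simp
  also have "norm \<dots> \<le> norm (T (t' - t0) (\<Gamma> t0) - T (t - t0) (\<Gamma> t0)) + (norm (R t') + norm (R t))"
    by (intro order_trans[OF norm_triangle_ineq] add_left_mono norm_triangle_ineq4)
  finally show ?thesis using tail[of t] tail[of t'] t by (simp add: algebra_simps)
qed

lemma continuous_on_convolution: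
  assumes int: "\<And>t. 0 \<le> t \<Longrightarrow> (\<lambda>s. T (t - s) (G s)) integrable_on {0..t}"
    and bounded: "\<And>N. bounded (G ` {0..N})"
  shows "continuous_on {0..} (\<lambda>t. integral {0..t} (\<lambda>s. T (t - s) (G s)))"
  unfolding continuous_on_iff
proof (intro ballI allI impI)
  define \<Gamma> where "\<Gamma> t = integral {0..t} (\<lambda>s. T (t - s) (G s))" for t
  fix t e :: real assume t: "t \<in> {0..}" and e: "e > 0"
  define N where "N = t + 1"
  obtain B where "B > 0" and "\<forall>y\<in>G ` {0..N}. norm y \<le> B"
    using bounded[of N] unfolding bounded_pos by blast
  then have B: "\<And>s. s \<in> {0..N} \<Longrightarrow> norm (G s) \<le> B" by blast
  define C where "C = K * exp (\<omega> * N) * B"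
  have "C > 0" using K_ge_1 \<open>B > 0\<close> by (simp add: C_def)
  define \<eta> where "\<eta> = min (1/2) (e / (6 * (C + 1)))"
  have \<eta>: "\<eta> > 0" "\<eta> \<le> 1/2" and C\<eta>: "C * (3 * \<eta>) < e / 2"
  proof -
    show "\<eta> > 0" using e \<open>C > 0\<close> by (simp add: \<eta>_def)
    show "\<eta> \<le> 1/2" unfolding \<eta>_def by (rule min.cobounded1)
    have "C * (3 * \<eta>) \<le> C * (3 * (e / (6 * (C + 1))))"
      using \<open>C > 0\<close> by (intro mult_left_mono) (auto simp: \<eta>_def)
    also have "\<dots> = e / 2 * (C / (C + 1))" using \<open>C > 0\<close> by (simp add: field_simps)
    also have "\<dots> < e / 2" using e \<open>C > 0\<close> by (simp add: field_simps)
    finally show "C * (3 * \<eta>) < e / 2" .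
  qed
  define t0 where "t0 = max 0 (t - \<eta>)"
  have t0: "0 \<le> t0" "t0 \<le> t" "t - t0 \<le> \<eta>" using t \<eta> by (auto simp: t0_def)
  obtain \<delta> where \<delta>: "\<delta> > 0" "\<And>r. r \<in> {0..} \<Longrightarrow> dist r (t - t0) < \<delta> \<Longrightarrow>
      dist (T r (\<Gamma> t0)) (T (t - t0) (\<Gamma> t0)) < e / 2"
    using continuous_on_T_apply[of "\<Gamma> t0"] t0 e unfolding continuous_on_iff
    by (metis atLeast_iff diff_ge_0_iff_ge half_gt_zero)
  show "\<exists>d>0. \<forall>t'\<in>{0..}. dist t' t < d \<longrightarrow> dist (\<Gamma> t') (\<Gamma> t) < e"
  proof (intro exI[of _ "min \<delta> \<eta>"] conjI ballI impI)
    fix t' assume t': "t' \<in> {0..}" "dist t' t < min \<delta> \<eta>"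
    then have t'0: "t0 \<le> t'" "t' - t0 \<le> 2 * \<eta>" "t' \<le> N" "dist (t' - t0) (t - t0) < \<delta>"
      using t0 \<eta> by (auto simp: t0_def N_def dist_real_def)
    have "norm (\<Gamma> t' - \<Gamma> t) \<le> norm (T (t' - t0) (\<Gamma> t0) - T (t - t0) (\<Gamma> t0))
           + C * ((t' - t0) + (t - t0))"
      unfolding \<Gamma>_def C_def using t0 t'0 by (intro norm_convolution_diff_le int B) (auto simp: N_def)
    also have "\<dots> < e / 2 + C * (3 * \<eta>)"
      using \<delta>(2)[of "t' - t0"] t'0 t0 \<open>C > 0\<close> by (intro add_less_le_mono mult_left_mono) (auto simp: dist_norm)
    finally show "dist (\<Gamma> t') (\<Gamma> t) < e" using C\<eta> by (simp add: dist_norm)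
  qed (use \<delta> \<eta> in auto)
qed

lemma mild_solution_initial_value:
  assumes "mild_solution T f \<sigma> u x0 \<phi>"
  shows "\<phi> 0 = x0"
proof -
  have "((\<lambda>s. T (0 - s) (f (\<sigma> s) (\<phi> s) (u s))) has_integral (\<phi> 0 - T 0 x0)) {0..0}"
    using assms by (auto simp: mild_solution_def)
  moreover have "((\<lambda>s. T (0 - s) (f (\<sigma> s) (\<phi> s) (u s))) has_integral 0) {0..0::real}"
    using has_integral_refl(1)[of _ "0::real"] by (simp add: cbox_interval)
  ultimately have "\<phi> 0 - T 0 x0 = 0" by (rule has_integral_unique)
  then show ?thesis by simp
qed

lemma mild_solution_shift:
  assumes mild: "mild_solution T f \<sigma> u x0 \<phi>" and t0: "0 \<le> t0"
  shows "mild_solution T f (\<lambda>s. \<sigma> (t0 + s)) (\<lambda>s. u (t0 + s)) (\<phi> t0) (\<lambda>s. \<phi> (t0 + s))"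
  unfolding mild_solution_def
proof (intro conjI allI impI)
  have cont: "continuous_on {0..} \<phi>" and I: "\<And>t. t \<ge> 0 \<Longrightarrow>
      ((\<lambda>s. T (t - s) (f (\<sigma> s) (\<phi> s) (u s))) has_integral (\<phi> t - T t x0)) {0..t}"
    using mild unfolding mild_solution_def by auto
  show "continuous_on {0..} (\<lambda>s. \<phi> (t0 + s))"
    by (rule continuous_on_compose2[OF cont]) (use t0 in \<open>auto intro!: continuous_intros\<close>)
  fix \<tau> :: real assume \<tau>: "0 \<le> \<tau>"
  have "(\<phi> (t0 + \<tau>) - T (t0 + \<tau>) x0) - T (t0 + \<tau> - t0) (\<phi> t0 - T t0 x0) = \<phi> (t0 + \<tau>) - T \<tau> (\<phi> t0)"
    using T_add_apply[of \<tau> t0 x0] t0 \<tau> by (simp add: blinfun.diff_right add.commute)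
  moreover have "((\<lambda>s. T (t0 + \<tau> - s) (f (\<sigma> s) (\<phi> s) (u s))) has_integral
      ((\<phi> (t0 + \<tau>) - T (t0 + \<tau>) x0) - T (t0 + \<tau> - t0) (\<phi> t0 - T t0 x0))) {t0..t0 + \<tau>}"
    using t0 \<tau> by (intro has_integral_convolution_split I) auto
  ultimately have "((\<lambda>s. T (t0 + \<tau> - s) (f (\<sigma> s) (\<phi> s) (u s))) has_integral
      (\<phi> (t0 + \<tau>) - T \<tau> (\<phi> t0))) {t0..t0 + \<tau>}" by (simp only:)
  from has_integral_shift_real_ivl[OF this, of t0]
  show "((\<lambda>s. T (\<tau> - s) (f (\<sigma> (t0 + s)) (\<phi> (t0 + s)) (u (t0 + s)))) has_integral
      (\<phi> (t0 + \<tau>) - T \<tau> (\<phi> t0))) {0..\<tau>}" by (simp add: add.commute)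
qed

end

section \<open>Piecewise constant signals\<close>

lemma integrable_on_constant_piece:
  fixes F :: "'q \<Rightarrow> real \<Rightarrow> 'a::banach"
  assumes const: "\<And>s t. s \<in> {a<..<b} \<Longrightarrow> t \<in> {a<..<b} \<Longrightarrow> \<sigma> s = \<sigma> t"
    and cont: "\<And>q. continuous_on {a..b} (F q)"
  shows "(\<lambda>s. F (\<sigma> s) s) integrable_on {a..b}"
proof (cases "a < b")
  case True
  have "F (\<sigma> ((a + b) / 2)) integrable_on {a..b}" by (rule integrable_continuous_interval[OF cont])
  then show ?thesis
    by (rule integrable_spike_finite[of "{a, b}", rotated 2])
      (use True in \<open>auto intro!: arg_cong[where f="\<lambda>q. F q _"] const\<close>)
next
  case False
  then show ?thesis using integrable_on_null[of a b "\<lambda>s. F (\<sigma> s) s"] by simp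
qed

lemma integrable_on_piecewise_constant:
  fixes F :: "'q \<Rightarrow> real \<Rightarrow> 'a::banach"
  assumes pc: "piecewise_constant \<sigma>" and a: "0 \<le> a" and cont: "\<And>q. continuous_on {a..b} (F q)"
  shows "(\<lambda>s. F (\<sigma> s) s) integrable_on {a..b}"
proof -
  obtain S where S: "S \<subseteq> {0..}" "\<And>b. finite (S \<inter> {0..b})"
    and const: "\<And>a b. 0 \<le> a \<Longrightarrow> a < b \<Longrightarrow> S \<inter> {a<..<b} = {} \<Longrightarrow>
                 (\<forall>s\<in>{a<..<b}. \<forall>t\<in>{a<..<b}. \<sigma> s = \<sigma> t)"
    using pc unfolding piecewise_constant_def by blast
  have piece: "(\<lambda>s. F (\<sigma> s) s) integrable_on {u..v}" if "a \<le> u" "v \<le> b" "S \<inter> {u<..<v} = {}" for u v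
  proof (rule integrable_on_constant_piece[where F = F and \<sigma> = \<sigma>])
    show "continuous_on {u..v} (F q)" for q using that(1,2) by (intro continuous_on_subset[OF cont]) auto
    fix s t assume st: "s \<in> {u<..<v}" "t \<in> {u<..<v}"
    then have "0 \<le> u" "u < v" using a that(1) by auto
    then show "\<sigma> s = \<sigma> t" using const[of u v] that(3) st by blast
  qed
  have "(\<lambda>s. F (\<sigma> s) s) integrable_on cbox a b"
  proof (rule integrable_on_little_subintervals, intro ballI)
    fix x assume x: "x \<in> cbox a b"
    obtain \<delta> where \<delta>: "\<delta> > 0" "\<And>y. y \<in> S \<inter> {0..x+1} \<Longrightarrow> y \<noteq> x \<Longrightarrow> \<delta> \<le> dist x y"
      using finite_set_avoid[OF S(2)[of "x+1"], of x] by blast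
    define d where "d = min \<delta> 1"
    have no_switch: "y \<notin> S" if "dist x y < d" "y \<noteq> x" for y
    proof
      assume "y \<in> S"
      then have "y \<in> S \<inter> {0..x+1}" using S(1) that unfolding d_def by (auto simp: dist_real_def)
      then show False using \<delta>(2)[of y] that unfolding d_def by auto
    qed
    show "\<exists>d>0. \<forall>u v. x \<in> cbox u v \<and> cbox u v \<subseteq> ball x d \<and> cbox u v \<subseteq> cbox a b \<longrightarrow>
           (\<lambda>s. F (\<sigma> s) s) integrable_on cbox u v"
    proof (intro exI[of _ d] conjI allI impI)
      show "d > 0" using \<delta> unfolding d_def by simp
      fix u v assume uv: "x \<in> cbox u v \<and> cbox u v \<subseteq> ball x d \<and> cbox u v \<subseteq> cbox a b"
      then have uxv: "u \<le> x" "x \<le> v" by auto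
      have "u \<in> cbox u v" "v \<in> cbox u v" using uxv by auto
      then have ub: "u \<in> ball x d" "v \<in> ball x d" "a \<le> u" "v \<le> b"
        using uv by (auto dest: subsetD simp del: mem_ball)
      have "S \<inter> {u<..<x} = {}" "S \<inter> {x<..<v} = {}"
        using ub no_switch by (fastforce simp: dist_real_def)+
      then have "(\<lambda>s. F (\<sigma> s) s) integrable_on {u..x}" "(\<lambda>s. F (\<sigma> s) s) integrable_on {x..v}"
        using piece ub uxv by auto
      then show "(\<lambda>s. F (\<sigma> s) s) integrable_on cbox u v"
        using Henstock_Kurzweil_Integration.integrable_combine[OF uxv] by simp
    qed
  qed
  then show ?thesis by simp
qed

lemma piecewise_constant_shift:
  assumes pc: "piecewise_constant \<sigma>" and t0: "0 \<le> t0"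
  shows "piecewise_constant (\<lambda>s. \<sigma> (t0 + s))"
proof -
  obtain S where S: "S \<subseteq> {0..}" "\<And>b. finite (S \<inter> {0..b})"
    and const: "\<And>a b. 0 \<le> a \<Longrightarrow> a < b \<Longrightarrow> S \<inter> {a<..<b} = {} \<Longrightarrow>
                 (\<forall>s\<in>{a<..<b}. \<forall>t\<in>{a<..<b}. \<sigma> s = \<sigma> t)"
    using pc unfolding piecewise_constant_def by blast
  define S' where "S' = (\<lambda>s. s - t0) ` (S \<inter> {t0..})"
  show ?thesis
    unfolding piecewise_constant_def
  proof (intro exI[of _ S'] conjI allI impI ballI)
    show "S' \<subseteq> {0..}" by (auto simp: S'_def)
    fix b :: real
    have "S' \<inter> {0..b} \<subseteq> (\<lambda>s. s - t0) ` (S \<inter> {0..b + t0})" using t0 by (auto simp: S'_def)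
    then show "finite (S' \<inter> {0..b})" using S(2) by (meson finite_imageI finite_subset)
  next
    fix a b s t :: real
    assume ab: "0 \<le> a" "a < b" "S' \<inter> {a<..<b} = {}" and st: "s \<in> {a<..<b}" "t \<in> {a<..<b}"
    have "S \<inter> {a + t0<..<b + t0} = {}"
      using ab by (force simp: S'_def)
    then show "\<sigma> (t0 + s) = \<sigma> (t0 + t)"
      using const[of "a + t0" "b + t0"] ab st t0 by (auto simp: add.commute)
  qed
qed

lemma has_integral_exp_mult:
  fixes a t :: real
  assumes "a \<noteq> 0" and "0 \<le> t"
  shows "((\<lambda>s. exp (a * s)) has_integral (exp (a * t) - 1) / a) {0..t}"
proof -
  have "((\<lambda>s. exp (a * s)) has_integral (exp (a * t) / a - exp (a * 0) / a)) {0..t}"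
    using assms
    by (intro fundamental_theorem_of_calculus)
      (auto intro!: derivative_eq_intros simp: has_real_derivative_iff_has_vector_derivative[symmetric])
  then show ?thesis by (simp add: diff_divide_distrib)
qed

lemma gronwall_exp_bound:
  fixes D :: "real \<Rightarrow> real"
  assumes h: "0 \<le> h" and c: "c > 0" and A: "A \<ge> 0"
    and cont: "continuous_on {0..h} D" and nonneg: "\<And>\<tau>. \<tau> \<in> {0..h} \<Longrightarrow> 0 \<le> D \<tau>"
    and le: "\<And>\<tau>. \<tau> \<in> {0..h} \<Longrightarrow> D \<tau> \<le> A + c * integral {0..\<tau>} D"
    and \<tau>: "\<tau> \<in> {0..h}"
  shows "D \<tau> \<le> 2 * A * exp (2 * c * \<tau>)"
proof -
  \<comment> \<open>The maximum \<open>Q\<close> of \<open>D s * exp (-2 c s)\<close> satisfies \<open>Q \<le> A + Q / 2\<close>.\<close>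
  define E where "E s = D s * exp (- (2 * c) * s)" for s
  have "continuous_on {0..h} E" unfolding E_def by (intro continuous_intros cont)
  then obtain m where m: "m \<in> {0..h}" and max: "\<And>s. s \<in> {0..h} \<Longrightarrow> E s \<le> E m"
    using continuous_attains_sup[of "{0..h}" E] h by auto
  define Q where "Q = E m"
  have "Q \<ge> 0" using nonneg[OF m] by (simp add: Q_def E_def)
  have D_le: "D s \<le> Q * exp (2 * c * s)" if "s \<in> {0..h}" for s
  proof -
    have "D s = E s * exp (2 * c * s)" by (simp add: E_def flip: exp_add)
    then show ?thesis using max[OF that] by (simp add: Q_def)
  qed
  have "E s \<le> A + Q / 2" if s: "s \<in> {0..h}" for s
  proof -
    have exp_int: "((\<lambda>r. Q * exp (2 * c * r)) has_integral Q * ((exp (2 * c * s) - 1) / (2 * c))) {0..s}"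
      using c s by (intro has_integral_mult_right has_integral_exp_mult) auto
    have "integral {0..s} D \<le> Q * ((exp (2 * c * s) - 1) / (2 * c))"
    proof (rule has_integral_le[OF integrable_integral exp_int])
      show "D integrable_on {0..s}"
        using s by (intro integrable_continuous_interval continuous_on_subset[OF cont]) auto
      show "D r \<le> Q * exp (2 * c * r)" if "r \<in> {0..s}" for r
        using that s by (intro D_le) auto
    qed
    also have "\<dots> \<le> Q * (exp (2 * c * s) / (2 * c))"
      using \<open>Q \<ge> 0\<close> c by (intro mult_left_mono divide_right_mono) auto
    finally have "c * integral {0..s} D \<le> c * (Q * (exp (2 * c * s) / (2 * c)))"
      using c by (intro mult_left_mono) auto
    then have "D s \<le> A + Q / 2 * exp (2 * c * s)" using le[OF s] c by simp
    then have "E s \<le> (A + Q / 2 * exp (2 * c * s)) * exp (- (2 * c) * s)"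
      unfolding E_def by (intro mult_right_mono) auto
    also have "\<dots> = A * exp (- (2 * c) * s) + Q / 2" by (simp add: algebra_simps flip: exp_add)
    also have "\<dots> \<le> A + Q / 2" using A c s by (simp add: mult_left_le)
    finally show ?thesis .
  qed
  from this[OF m] have "Q \<le> 2 * A" by (simp add: Q_def)
  then show ?thesis using D_le[OF \<tau>] by (smt (verit) exp_gt_zero mult_right_mono)
qed

lemma bcontfun_exp_unweight:
  fixes \<psi> :: "real \<Rightarrow> 'a::real_normed_vector"
  assumes cont: "continuous_on {0..} \<psi>" and bound: "\<forall>t\<ge>0. norm (\<psi> t) \<le> r * exp (\<beta> * t)"
  shows "(\<lambda>t. exp (- \<beta> * max 0 t) *\<^sub>R \<psi> (max 0 t)) \<in> bcontfun"
proof (rule bcontfun_normI)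
  show "continuous_on UNIV (\<lambda>t. exp (- \<beta> * max 0 t) *\<^sub>R \<psi> (max 0 t))"
    by (intro continuous_intros continuous_on_compose2[OF cont]) (auto intro!: continuous_intros)
  fix t :: real
  have "norm (exp (- \<beta> * max 0 t) *\<^sub>R \<psi> (max 0 t)) \<le> exp (- \<beta> * max 0 t) * (r * exp (\<beta> * max 0 t))"
    using bound by (simp add: mult_left_mono)
  also have "\<dots> = r" by (simp add: exp_minus field_simps)
  finally show "norm (exp (- \<beta> * max 0 t) *\<^sub>R \<psi> (max 0 t)) \<le> r" .
qed

lemma exp_weighted_fixed_point:
  fixes F :: "(real \<Rightarrow> 'a::banach) \<Rightarrow> real \<Rightarrow> 'a" and \<beta> :: real
  defines "X \<equiv> {\<psi>. continuous_on {0..} \<psi> \<and> (\<exists>r. \<forall>t\<ge>0. norm (\<psi> t) \<le> r * exp (\<beta> * t))}"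
  assumes maps: "\<And>\<psi>. \<psi> \<in> X \<Longrightarrow> F \<psi> \<in> X"
    and contraction: "\<And>\<psi>1 \<psi>2 r. \<psi>1 \<in> X \<Longrightarrow> \<psi>2 \<in> X \<Longrightarrow>
      (\<forall>t\<ge>0. norm (\<psi>1 t - \<psi>2 t) \<le> r * exp (\<beta> * t)) \<Longrightarrow>
      (\<forall>t\<ge>0. norm (F \<psi>1 t - F \<psi>2 t) \<le> r / 2 * exp (\<beta> * t))"
  shows "\<exists>\<psi>\<in>X. \<forall>t\<ge>0. F \<psi> t = \<psi> t"
proof -
  define weight where "weight g s = exp (\<beta> * s) *\<^sub>R apply_bcontfun g s" for g :: "real \<Rightarrow>\<^sub>C 'a" and s
  have weight_X: "weight g \<in> X" for g
  proof -
    have "norm (weight g t) \<le> norm g * exp (\<beta> * t)" for t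
      using norm_bounded[of g t] by (simp add: weight_def mult.commute mult_left_mono)
    then show ?thesis by (auto simp: X_def weight_def intro!: continuous_intros)
  qed
  define unweight where "unweight \<psi> t = exp (- \<beta> * max 0 t) *\<^sub>R \<psi> (max 0 t)" for \<psi> :: "real \<Rightarrow> 'a" and t
  have unweight_bcontfun: "unweight \<psi> \<in> bcontfun" if "\<psi> \<in> X" for \<psi>
  proof -
    from that obtain r where "continuous_on {0..} \<psi>" "\<forall>t\<ge>0. norm (\<psi> t) \<le> r * exp (\<beta> * t)"
      by (auto simp: X_def)
    then show ?thesis unfolding unweight_def by (rule bcontfun_exp_unweight)
  qed
  define \<Phi> where "\<Phi> g = Bcontfun (unweight (F (weight g)))" for g
  have \<Phi>_apply: "apply_bcontfun (\<Phi> g) t = unweight (F (weight g)) t" for g t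
    using Bcontfun_inverse[OF unweight_bcontfun[OF maps[OF weight_X]]] by (simp add: \<Phi>_def)
  have "dist (\<Phi> g1) (\<Phi> g2) \<le> 1/2 * dist g1 g2" for g1 g2
  proof (rule dist_bound)
    fix t :: real
    have "norm (weight g1 s - weight g2 s) \<le> dist g1 g2 * exp (\<beta> * s)" for s
      using dist_bounded[of g1 s g2]
      by (simp add: weight_def dist_norm mult.commute mult_left_mono flip: scaleR_diff_right)
    then have "norm (F (weight g1) (max 0 t) - F (weight g2) (max 0 t))
        \<le> dist g1 g2 / 2 * exp (\<beta> * max 0 t)"
      using contraction[OF weight_X weight_X] by simp
    then have "exp (- \<beta> * max 0 t) * norm (F (weight g1) (max 0 t) - F (weight g2) (max 0 t))
        \<le> exp (- \<beta> * max 0 t) * (dist g1 g2 / 2 * exp (\<beta> * max 0 t))"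
      by (rule mult_left_mono) simp
    also have "\<dots> = 1/2 * dist g1 g2" by (simp add: exp_minus field_simps)
    finally show "dist (\<Phi> g1 t) (\<Phi> g2 t) \<le> 1/2 * dist g1 g2"
      by (simp add: \<Phi>_apply unweight_def dist_norm flip: scaleR_diff_right)
  qed
  then obtain g where g: "\<Phi> g = g"
    using banach_fix_type[of "1/2" \<Phi>] by auto
  have "F (weight g) t = weight g t" if "t \<ge> 0" for t
    using \<Phi>_apply[of g t] that by (simp add: g weight_def unweight_def flip: exp_add)
  then show ?thesis using weight_X by blast
qed

text \<open>\<open>halving_sum b n = (\<Sum>k<n. b k / 2 ^ (n - 1 - k))\<close>; with \<open>b k\<close> the input mass on the
  \<open>k\<close>-th time block it bounds, up to a constant, the zero-state response at time \<open>n h\<close>.\<close>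

primrec halving_sum :: "(nat \<Rightarrow> real) \<Rightarrow> nat \<Rightarrow> real" where
  "halving_sum b 0 = 0"
| "halving_sum b (Suc n) = halving_sum b n / 2 + b n"

lemma halving_sum_nonneg: "(\<And>n. 0 \<le> b n) \<Longrightarrow> 0 \<le> halving_sum b n"
  by (induction n) auto

lemma halving_sum_le:
  assumes "\<And>n. b n \<le> B" and "0 \<le> B"
  shows "halving_sum b n \<le> 2 * B"
proof (induction n)
  case (Suc n)
  then show ?case using assms(1)[of n] by simp
qed (use assms(2) in simp)

lemma powr_midpoint_le:
  fixes x y P :: real
  assumes x: "x \<ge> 0" and y: "y \<ge> 0" and P: "P \<ge> 1"
  shows "(x / 2 + y / 2) powr P \<le> x powr P / 2 + y powr P / 2"
proof (cases "x = 0 \<or> y = 0")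
  case True
  have "(z / 2) powr P \<le> z powr P / 2" if "z \<ge> 0" for z :: real
  proof -
    have "(2::real) \<le> 2 powr P" using P powr_mono[of 1 P 2] by simp
    then have "z powr P / 2 powr P \<le> z powr P / 2" by (intro divide_left_mono) auto
    then show ?thesis using that by (simp add: powr_divide)
  qed
  then show ?thesis using True x y P by auto
next
  case False
  then have "(\<lambda>x. x powr P) ((1 - 1/2) *\<^sub>R x + (1/2) *\<^sub>R y) \<le> (1 - 1/2) * x powr P + (1/2) * y powr P"
    using x y by (intro convex_onD[OF powr_convex[OF P]]) auto
  then show ?thesis by simp
qed

lemma sum_halving_sum_powr_le:
  assumes P: "P \<ge> 1" and b: "\<And>n. b n \<ge> 0"
  shows "(\<Sum>n<N. halving_sum b (Suc n) powr P) \<le> 2 powr P * (\<Sum>n<N. b n powr P)"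
proof -
  let ?e = "halving_sum b"
  have step: "?e (Suc n) powr P \<le> ?e n powr P / 2 + 2 powr P * b n powr P / 2" for n
  proof -
    have "?e (Suc n) powr P \<le> ?e n powr P / 2 + (2 * b n) powr P / 2"
      using powr_midpoint_le[of "?e n" "2 * b n" P] halving_sum_nonneg[of b n] b P by simp
    then show ?thesis using b[of n] by (simp add: powr_mult)
  qed
  have "(\<Sum>n<N. ?e n powr P) \<le> (\<Sum>n<N. ?e (Suc n) powr P)"
  proof (cases N)
    case (Suc m)
    have "(\<Sum>n<Suc m. ?e n powr P) = (\<Sum>n<m. ?e (Suc n) powr P)"
      by (subst sum.lessThan_Suc_shift) simp
    also have "\<dots> \<le> (\<Sum>n<Suc m. ?e (Suc n) powr P)" by simp
    finally show ?thesis using Suc by simp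
  qed simp
  moreover have "(\<Sum>n<N. ?e (Suc n) powr P) \<le> (\<Sum>n<N. ?e n powr P / 2 + 2 powr P * b n powr P / 2)"
    by (intro sum_mono step)
  moreover have "(\<Sum>n<N. ?e n powr P / 2 + 2 powr P * b n powr P / 2)
      = (\<Sum>n<N. ?e n powr P) / 2 + 2 powr P * (\<Sum>n<N. b n powr P) / 2"
    by (simp add: sum.distrib sum_divide_distrib sum_distrib_left)
  ultimately show ?thesis by linarith
qed

lemma powr_tangent_le:
  fixes m y P :: real
  assumes m: "m > 0" and y: "y \<ge> 0" and P: "P \<ge> 1"
  shows "m powr P + P * m powr (P - 1) * (y - m) \<le> y powr P"
proof (cases "y = 0")
  case True
  have "P * m powr (P - 1) * m = P * m powr P" using m by (simp add: powr_diff field_simps)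
  then show ?thesis using True P m by (simp add: algebra_simps)
next
  case False
  have "((\<lambda>x. x powr P) has_real_derivative P * m powr (P - 1)) (at m within {0<..})"
    using m by (auto intro!: derivative_eq_intros simp: powr_diff field_simps)
  then have "P * m powr (P - 1) * (y - m) \<le> y powr P - m powr P"
    using m y False powr_convex[OF P] by (intro convex_on_imp_above_tangent) (auto simp: interior_open)
  then show ?thesis by simp
qed

lemma powr_integral_le:
  fixes g :: "real \<Rightarrow> real"
  assumes P: "P \<ge> 1" and h: "h > 0"
    and g: "g integrable_on {a..a+h}" and gP: "(\<lambda>s. g s powr P) integrable_on {a..a+h}"
    and nonneg: "\<And>s. s \<in> {a..a+h} \<Longrightarrow> g s \<ge> 0"
  shows "(integral {a..a+h} g) powr P \<le> h powr (P - 1) * integral {a..a+h} (\<lambda>s. g s powr P)"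
proof -
  \<comment> \<open>Jensen's inequality, obtained by integrating the tangent of \<open>x powr P\<close> at the mean value \<open>m\<close>.\<close>
  define m where "m = integral {a..a+h} g / h"
  have "integral {a..a+h} g \<ge> 0" using nonneg by (intro integral_nonneg g) auto
  show ?thesis
  proof (cases "m = 0")
    case True
    then show ?thesis using h P by (simp add: m_def integral_nonneg[OF gP])
  next
    case False
    with \<open>integral {a..a+h} g \<ge> 0\<close> h have m: "m > 0" by (simp add: m_def)
    define tangent where "tangent s = m powr P + P * m powr (P - 1) * (g s - m)" for s
    have tangent_int: "(tangent has_integral h * m powr P) {a..a+h}"
    proof -
      have const: "((\<lambda>s. c) has_integral h * c) {a..a+h}" for c
        using has_integral_const_real[of c a "a+h"] h by (simp add: mult.commute)
      have "(tangent has_integral h * m powr P + P * m powr (P - 1) * (integral {a..a+h} g - h * m)) {a..a+h}"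
        unfolding tangent_def
        by (intro has_integral_add has_integral_mult_right has_integral_diff integrable_integral g const)
      then show ?thesis using h by (simp add: m_def)
    qed
    have "h * m powr P \<le> integral {a..a+h} (\<lambda>s. g s powr P)"
      using has_integral_le[OF tangent_int integrable_integral[OF gP]] powr_tangent_le[OF m nonneg P]
      by (auto simp: tangent_def)
    then have "h powr (P - 1) * (h * m powr P) \<le> h powr (P - 1) * integral {a..a+h} (\<lambda>s. g s powr P)"
      by (intro mult_left_mono) auto
    moreover have "(integral {a..a+h} g) powr P = h powr (P - 1) * (h * m powr P)"
    proof -
      have "integral {a..a+h} g = h * m" using h by (simp add: m_def)
      then have "(integral {a..a+h} g) powr P = h powr P * m powr P" using h m by (simp add: powr_mult)
      also have "h powr P = h powr (P - 1) * h" using h by (simp add: powr_diff)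
      finally show ?thesis by simp
    qed
    ultimately show ?thesis by simp
  qed
qed

lemma in_some_block:
  fixes h t :: real
  assumes "h > 0" "t \<ge> 0"
  shows "\<exists>n. t \<in> {real n * h..real n * h + h}"
proof
  define n where "n = nat \<lfloor>t / h\<rfloor>"
  have "real n = of_int \<lfloor>t / h\<rfloor>" using assms by (simp add: n_def)
  then have "real n \<le> t / h" "t / h \<le> real n + 1"
    using of_int_floor_le[of "t / h"] real_of_int_floor_add_one_ge[of "t / h"] by linarith+
  then show "t \<in> {real n * h..real n * h + h}"
    using assms by (simp add: le_divide_eq divide_le_eq distrib_right)
qed

lemma integral_eq_sum_blocks:
  fixes g :: "real \<Rightarrow> 'a::banach"
  assumes g: "\<And>b. g integrable_on {0..b}" and h: "h \<ge> 0"
  shows "integral {0..real N * h} g = (\<Sum>n<N. integral {real n * h..real n * h + h} g)"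
proof (induction N)
  case (Suc N)
  have "integral {0..real N * h} g + integral {real N * h..real (Suc N) * h} g = integral {0..real (Suc N) * h} g"
    using h g by (intro Henstock_Kurzweil_Integration.integral_combine) (auto simp: distrib_right)
  then show ?case using Suc by (simp add: distrib_right add.commute)
qed simp

lemma integral_powr_le_of_block_bound:
  fixes g v :: "real \<Rightarrow> real" and h W P :: real
  defines "b \<equiv> \<lambda>k. integral {real k * h..real k * h + h} v"
  assumes P: "P \<ge> 1" and h: "h > 0" and W: "W \<ge> 0"
    and g: "continuous_on {0..} g" "\<And>t. 0 \<le> g t"
    and v: "\<And>s. 0 \<le> v s" "\<And>a b. 0 \<le> a \<Longrightarrow> v integrable_on {a..b}"
      "\<And>a b. 0 \<le> a \<Longrightarrow> (\<lambda>s. v s powr P) integrable_on {a..b}"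
    and bound: "\<And>n t. t \<in> {real n * h..real n * h + h} \<Longrightarrow> g t \<le> W * halving_sum b (Suc n)"
  shows "integral {0..real N * h} (\<lambda>t. g t powr P) \<le> (2 * W * h) powr P * integral {0..real N * h} (\<lambda>s. v s powr P)"
proof -
  define B where "B n = integral {real n * h..real n * h + h} (\<lambda>s. v s powr P)" for n
  have gP_int: "(\<lambda>t. g t powr P) integrable_on {a..c}" if "0 \<le> a" for a c
    using that P g by (intro integrable_continuous_interval continuous_on_powr' continuous_on_subset[OF g(1)]
        continuous_on_const) auto
  have b: "0 \<le> b n" for n unfolding b_def using h by (intro integral_nonneg v) auto
  have block: "integral {real n * h..real n * h + h} (\<lambda>t. g t powr P) \<le> h * (W * halving_sum b (Suc n)) powr P" for n
  proof -
    have "integral {real n * h..real n * h + h} (\<lambda>t. g t powr P)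
        \<le> integral {real n * h..real n * h + h} (\<lambda>_. (W * halving_sum b (Suc n)) powr P)"
      using h P g(2) bound by (intro integral_le gP_int integrable_const_ivl powr_mono2) auto
    then show ?thesis using h by simp
  qed
  have "integral {0..real N * h} (\<lambda>t. g t powr P) = (\<Sum>n<N. integral {real n * h..real n * h + h} (\<lambda>t. g t powr P))"
    using h by (intro integral_eq_sum_blocks gP_int) auto
  also have "\<dots> \<le> (\<Sum>n<N. h * W powr P * halving_sum b (Suc n) powr P)"
    using block W b halving_sum_nonneg by (intro sum_mono) (simp add: powr_mult mult.assoc)
  also have "\<dots> = h * W powr P * (\<Sum>n<N. halving_sum b (Suc n) powr P)"
    by (simp add: sum_distrib_left)
  also have "\<dots> \<le> h * W powr P * (2 powr P * (\<Sum>n<N. b n powr P))"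
    using h b P by (intro mult_left_mono sum_halving_sum_powr_le) auto
  also have "\<dots> \<le> h * W powr P * (2 powr P * (\<Sum>n<N. h powr (P - 1) * B n))"
    unfolding b_def B_def using h P v
    by (intro mult_left_mono sum_mono powr_integral_le) auto
  also have "\<dots> = (2 * W * h) powr P * (\<Sum>n<N. B n)"
  proof -
    have "h powr P = h powr (P - 1) * h" using h by (simp add: powr_diff)
    moreover have "(2 * W * h) powr P = 2 powr P * W powr P * h powr P" using h W by (simp add: powr_mult)
    moreover have "(\<Sum>n<N. h powr (P - 1) * B n) = h powr (P - 1) * (\<Sum>n<N. B n)"
      by (rule sum_distrib_left[symmetric])
    ultimately show ?thesis by (simp only:) (simp add: mult_ac)
  qed
  also have "(\<Sum>n<N. B n) = integral {0..real N * h} (\<lambda>s. v s powr P)"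
    unfolding B_def using h v by (intro integral_eq_sum_blocks[symmetric]) auto
  finally show ?thesis .
qed

section \<open>\<open>L\<^sup>p\<close> estimates on the half line\<close>

lemma nn_integral_lebesgue_on_eq_integral:
  fixes g :: "real \<Rightarrow> real"
  assumes g: "g integrable_on {a..b}" and nonneg: "\<And>s. s \<in> {a..b} \<Longrightarrow> 0 \<le> g s"
  shows "integrable (lebesgue_on {a..b}) g"
    and "(\<integral>\<^sup>+s. ennreal (g s) \<partial>lebesgue_on {a..b}) = ennreal (integral {a..b} g)"
proof -
  have "g absolutely_integrable_on {a..b}" by (rule nonnegative_absolutely_integrable_1[OF g nonneg])
  then show int: "integrable (lebesgue_on {a..b}) g"
    by (rule absolutely_integrable_imp_integrable) simp
  have "(\<integral>\<^sup>+s. ennreal (g s) \<partial>lebesgue_on {a..b}) = ennreal (integral\<^sup>L (lebesgue_on {a..b}) g)"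
    by (rule nn_integral_eq_integral[OF int]) (auto intro!: AE_I2 nonneg)
  also have "integral\<^sup>L (lebesgue_on {a..b}) g = integral {a..b} g"
    by (rule lebesgue_integral_eq_integral[OF int]) simp
  finally show "(\<integral>\<^sup>+s. ennreal (g s) \<partial>lebesgue_on {a..b}) = ennreal (integral {a..b} g)" .
qed

lemma integrable_on_of_nn_integral_finite:
  fixes g :: "real \<Rightarrow> real"
  assumes "g \<in> borel_measurable (lebesgue_on {a..b})" and "\<And>s. s \<in> {a..b} \<Longrightarrow> 0 \<le> g s"
    and "(\<integral>\<^sup>+s. ennreal (g s) \<partial>lebesgue_on {a..b}) < \<infinity>"
  shows "g integrable_on {a..b}"
proof -
  have "integrable (lebesgue_on {a..b}) g"
    using assms by (intro integrableI_nonneg) (auto intro!: AE_I2)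
  then show ?thesis by (rule integrable_on_lebesgue_on) simp
qed

lemma nn_integral_halfline_le:
  fixes G :: "real \<Rightarrow> real"
  assumes cont: "continuous_on {0..} G" and nonneg: "\<And>t. 0 \<le> t \<Longrightarrow> 0 \<le> G t" and h: "h > 0"
    and blocks: "\<And>N. integral {0..real N * h} G \<le> R"
  shows "(\<integral>\<^sup>+t. ennreal (G t) \<partial>lebesgue_on {0..}) \<le> ennreal R"
proof -
  define F where "F N t = ennreal (G t) * indicator {0..real N * h} t" for N t
  have "(SUP N. F N t) = ennreal (G t)" if t: "t \<in> {0..}" for t
  proof (rule antisym)
    show "(SUP N. F N t) \<le> ennreal (G t)"
      unfolding F_def by (intro SUP_least) (auto split: split_indicator)
    obtain N :: nat where "t / h \<le> real N" using real_arch_simple by blast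
    then have "F N t = ennreal (G t)" using h t by (simp add: F_def field_simps)
    then show "ennreal (G t) \<le> (SUP N. F N t)" by (metis SUP_upper UNIV_I)
  qed
  then have "(\<integral>\<^sup>+t. ennreal (G t) \<partial>lebesgue_on {0..}) = (\<integral>\<^sup>+t. (SUP N. F N t) \<partial>lebesgue_on {0..})"
    by (intro nn_integral_cong) simp
  also have "\<dots> = (SUP N. \<integral>\<^sup>+t. F N t \<partial>lebesgue_on {0..})"
  proof (rule nn_integral_monotone_convergence_SUP)
    show "incseq F"
      unfolding F_def incseq_def le_fun_def using h
      by (auto split: split_indicator intro: order_trans mult_right_mono)
    have "(\<lambda>t. ennreal (G t)) \<in> borel_measurable (lebesgue_on {0..})"
      by (intro measurable_compose[OF continuous_imp_measurable_on_sets_lebesgue[OF cont]]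
          measurable_ennreal) simp
    moreover have "{0..real N * h} \<in> sets (lebesgue_on {0..})" for N
      by (simp add: sets_restrict_space_iff)
    ultimately show "F N \<in> borel_measurable (lebesgue_on {0..})" for N
      unfolding F_def by (intro borel_measurable_times_ennreal borel_measurable_indicator)
  qed
  also have "\<dots> \<le> ennreal R"
  proof (rule SUP_least)
    fix N
    have "(\<integral>\<^sup>+t. F N t \<partial>lebesgue_on {0..}) = (\<integral>\<^sup>+t. ennreal (G t) \<partial>lebesgue_on {0..real N * h})"
      unfolding F_def using h
      by (auto simp: nn_integral_restrict_space intro!: nn_integral_cong split: split_indicator)
    also have "\<dots> = ennreal (integral {0..real N * h} G)"
      using nonneg by (intro nn_integral_lebesgue_on_eq_integral(2) integrable_continuous_interval
          continuous_on_subset[OF cont]) auto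
    also have "\<dots> \<le> ennreal R" using blocks by (rule ennreal_leI)
    finally show "(\<integral>\<^sup>+t. F N t \<partial>lebesgue_on {0..}) \<le> ennreal R" .
  qed
  finally show ?thesis .
qed

lemma Lp_norm_finite_eq:
  fixes u :: "real \<Rightarrow> 'a::real_normed_vector"
  assumes u: "u \<in> Lp p" and p: "1 \<le> p" "p \<noteq> \<infinity>"
  defines "I \<equiv> \<integral>\<^sup>+t. ennreal (norm (u t) powr enn2real p) \<partial>lebesgue_on {0..}"
  shows "enn2real p \<ge> 1" and "I < \<infinity>" and "Lp_norm p u = ennreal (enn2real I powr (1 / enn2real p))"
proof -
  show "enn2real p \<ge> 1" using enn2real_mono[OF p(1)] p(2) by (simp add: top.not_eq_extremum)
  have "Lp_norm p u < \<infinity>" using u by (simp add: Lp_def)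
  then show "I < \<infinity>"
    using p(2) by (auto simp: Lp_norm_def I_def Let_def top.not_eq_extremum split: if_splits)
  then show "Lp_norm p u = ennreal (enn2real I powr (1 / enn2real p))"
    using p(2) by (simp add: Lp_norm_def I_def Let_def)
qed

lemma Lp_integral_block_le:
  fixes u :: "real \<Rightarrow> 'a::real_normed_vector"
  assumes meas: "(\<lambda>s. norm (u s)) \<in> borel_measurable (lebesgue_on {0..})" and P: "P \<ge> 1"
    and fin: "(\<integral>\<^sup>+t. ennreal (norm (u t) powr P) \<partial>lebesgue_on {0..}) < \<infinity>" and a: "0 \<le> a"
  shows "(\<lambda>s. norm (u s) powr P) integrable_on {a..b}"
    and "integral {a..b} (\<lambda>s. norm (u s) powr P)
           \<le> enn2real (\<integral>\<^sup>+t. ennreal (norm (u t) powr P) \<partial>lebesgue_on {0..})"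
    and "(\<lambda>s. norm (u s)) integrable_on {a..b}"
proof -
  let ?I = "\<integral>\<^sup>+t. ennreal (norm (u t) powr P) \<partial>lebesgue_on {0..}"
  have sub: "{a..b} \<subseteq> {0..}" using a by auto
  have meas_ab: "(\<lambda>s. norm (u s)) \<in> borel_measurable (lebesgue_on {a..b})"
    by (rule measurable_restrict_mono[OF meas sub])
  then have measP: "(\<lambda>s. norm (u s) powr P) \<in> borel_measurable (lebesgue_on {a..b})"
    by (intro powr_real_measurable borel_measurable_const)
  have le: "(\<integral>\<^sup>+t. ennreal (norm (u t) powr P) \<partial>lebesgue_on {a..b}) \<le> ?I"
    using sub by (auto simp: nn_integral_restrict_space intro!: nn_integral_mono split: split_indicator)
  show intP: "(\<lambda>s. norm (u s) powr P) integrable_on {a..b}"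
    using le fin by (intro integrable_on_of_nn_integral_finite[OF measP]) auto
  have "ennreal (integral {a..b} (\<lambda>s. norm (u s) powr P)) \<le> ?I"
    using le nn_integral_lebesgue_on_eq_integral(2)[OF intP] by simp
  also have "?I = ennreal (enn2real ?I)" using fin by (simp add: ennreal_enn2real less_top)
  finally show "integral {a..b} (\<lambda>s. norm (u s) powr P) \<le> enn2real ?I"
    by (simp add: ennreal_le_iff)
  have "(\<lambda>s. 1 + norm (u s) powr P) integrable_on {a..b}" by (intro integrable_add integrable_const_ivl intP)
  then have "integrable (lebesgue_on {a..b}) (\<lambda>s. 1 + norm (u s) powr P)"
    by (rule nn_integral_lebesgue_on_eq_integral(1)) auto
  then have "integrable (lebesgue_on {a..b}) (\<lambda>s. norm (u s))"
  proof (rule Bochner_Integration.integrable_bound[OF _ meas_ab], intro AE_I2)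
    fix s
    show "norm (norm (u s)) \<le> norm (1 + norm (u s) powr P)"
    proof (cases "norm (u s) \<le> 1")
      case False
      then have "norm (u s) powr 1 \<le> norm (u s) powr P" using P by (intro powr_mono) auto
      then show ?thesis using False by simp
    qed (simp add: add_increasing2)
  qed
  then show "(\<lambda>s. norm (u s)) integrable_on {a..b}" by (rule integrable_on_lebesgue_on) simp
qed

lemma Linf_integral_block_le:
  fixes u :: "real \<Rightarrow> 'a::real_normed_vector"
  assumes u: "u \<in> Lp \<infinity>"
  defines "E \<equiv> enn2real (Lp_norm \<infinity> u)"
  shows "Lp_norm \<infinity> u = ennreal E"
    and "\<And>a b. 0 \<le> a \<Longrightarrow> (\<lambda>s. norm (u s)) integrable_on {a..b}"
    and "\<And>a b. 0 \<le> a \<Longrightarrow> a \<le> b \<Longrightarrow> integral {a..b} (\<lambda>s. norm (u s)) \<le> (b - a) * E"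
proof -
  have meas: "(\<lambda>s. norm (u s)) \<in> borel_measurable (lebesgue_on {0..})"
    using u by (auto simp: Lp_def intro: measurable_compose[OF _ borel_measurable_norm])
  show eq: "Lp_norm \<infinity> u = ennreal E" using u by (simp add: Lp_def E_def less_top)
  have "E \<ge> 0" by (simp add: E_def)
  have "AE s in lebesgue_on {0..}. ennreal (norm (u s)) \<le> ennreal E"
    using esssup_AE[of "\<lambda>t. ennreal (norm (u t))" "lebesgue_on {0..}"] eq by (simp add: Lp_norm_def)
  then have "AE s in lebesgue. s \<in> {0..} \<longrightarrow> norm (u s) \<le> E"
    using \<open>E \<ge> 0\<close> by (subst (asm) AE_restrict_space_iff) auto
  then have AE_ab: "AE s in lebesgue_on {a..b}. norm (u s) \<le> E" if "0 \<le> a" for a b :: real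
    using that by (subst AE_restrict_space_iff) (auto elim!: eventually_mono)
  have const: "integrable (lebesgue_on {a..b}) (\<lambda>s. E)" for a b :: real
    by (rule nn_integral_lebesgue_on_eq_integral(1)[OF integrable_const_ivl]) (use \<open>E \<ge> 0\<close> in auto)
  have int: "integrable (lebesgue_on {a..b}) (\<lambda>s. norm (u s))" if "0 \<le> a" for a b :: real
    using AE_ab[OF that] \<open>E \<ge> 0\<close> that
    by (intro Bochner_Integration.integrable_bound[OF const measurable_restrict_mono[OF meas]])
      (auto elim!: eventually_mono)
  show "(\<lambda>s. norm (u s)) integrable_on {a..b}" if "0 \<le> a" for a b
    by (rule integrable_on_lebesgue_on[OF int[OF that]]) simp
  show "integral {a..b} (\<lambda>s. norm (u s)) \<le> (b - a) * E" if ab: "0 \<le> a" "a \<le> b" for a b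
  proof -
    have "integral {a..b} (\<lambda>s. norm (u s)) = integral\<^sup>L (lebesgue_on {a..b}) (\<lambda>s. norm (u s))"
      by (rule lebesgue_integral_eq_integral[OF int[OF ab(1)], symmetric]) simp
    also have "\<dots> \<le> integral\<^sup>L (lebesgue_on {a..b}) (\<lambda>s. E)"
      by (rule integral_mono_AE[OF int[OF ab(1)] const AE_ab[OF ab(1)]])
    also have "\<dots> = integral {a..b} (\<lambda>s. E)"
      by (rule lebesgue_integral_eq_integral[OF const]) simp
    also have "\<dots> = (b - a) * E" using ab by simp
    finally show ?thesis .
  qed
qed

lemma Lp_locally_integrable:
  fixes u :: "real \<Rightarrow> 'a::real_normed_vector"
  assumes u: "u \<in> Lp p" and p: "1 \<le> p" and a: "0 \<le> a"
  shows "(\<lambda>s. norm (u s)) integrable_on {a..b}"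
proof (cases "p = \<infinity>")
  case True
  then show ?thesis using Linf_integral_block_le(2) u a by blast
next
  case False
  have "(\<lambda>s. norm (u s)) \<in> borel_measurable (lebesgue_on {0..})"
    using u by (auto simp: Lp_def intro: measurable_compose[OF _ borel_measurable_norm])
  then show ?thesis
    using Lp_norm_finite_eq[OF u p False] a by (intro Lp_integral_block_le(3)) auto
qed

lemma Linf_norm_le_of_block_bound:
  fixes u :: "real \<Rightarrow> 'a::real_normed_vector" and \<phi> :: "real \<Rightarrow> 'b::real_normed_vector" and h :: real
  defines "b \<equiv> \<lambda>k. integral {real k * h..real k * h + h} (\<lambda>s. norm (u s))"
  assumes u: "u \<in> Lp \<infinity>" and meas: "\<phi> \<in> borel_measurable (lebesgue_on {0..})" and h: "h > 0"
    and W: "W \<ge> 0"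
    and bound: "\<And>n t. t \<in> {real n * h..real n * h + h} \<Longrightarrow> norm (\<phi> t) \<le> W * halving_sum b (Suc n)"
  shows "Lp_norm \<infinity> \<phi> \<le> ennreal (2 * W * h) * Lp_norm \<infinity> u"
proof -
  define E where "E = enn2real (Lp_norm \<infinity> u)"
  note u_facts = Linf_integral_block_le[OF u, folded E_def]
  have "E \<ge> 0" by (simp add: E_def)
  have "b n \<le> h * E" for n
    unfolding b_def using u_facts(3)[of "real n * h" "real n * h + h"] h by simp
  then have halving: "halving_sum b n \<le> 2 * (h * E)" for n
    using h \<open>E \<ge> 0\<close> by (intro halving_sum_le) auto
  have pointwise: "norm (\<phi> t) \<le> 2 * W * h * E" if t: "t \<in> {0..}" for t
  proof -
    obtain n where "t \<in> {real n * h..real n * h + h}" using in_some_block[OF h] t by auto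
    then have "norm (\<phi> t) \<le> W * halving_sum b (Suc n)" by (rule bound)
    also have "\<dots> \<le> W * (2 * (h * E))" using W halving[of "Suc n"] by (intro mult_left_mono)
    finally show ?thesis by (simp add: mult_ac)
  qed
  have "Lp_norm \<infinity> \<phi> = esssup (lebesgue_on {0..}) (\<lambda>t. ennreal (norm (\<phi> t)))"
    by (simp add: Lp_norm_def)
  also have "\<dots> \<le> ennreal (2 * W * h * E)"
    using meas pointwise by (intro esssup_I) (auto intro!: AE_I2 ennreal_leI)
  also have "\<dots> = ennreal (2 * W * h) * Lp_norm \<infinity> u"
    using u_facts(1) W h \<open>E \<ge> 0\<close> by (simp add: ennreal_mult)
  finally show ?thesis .
qed

lemma Lp_norm_le_of_block_bound_finite:
  fixes u :: "real \<Rightarrow> 'a::real_normed_vector" and \<phi> :: "real \<Rightarrow> 'b::real_normed_vector" and h :: real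
  defines "b \<equiv> \<lambda>k. integral {real k * h..real k * h + h} (\<lambda>s. norm (u s))"
  assumes u: "u \<in> Lp p" and p: "1 \<le> p" "p \<noteq> \<infinity>" and cont: "continuous_on {0..} \<phi>"
    and h: "h > 0" and W: "W \<ge> 0"
    and bound: "\<And>n t. t \<in> {real n * h..real n * h + h} \<Longrightarrow> norm (\<phi> t) \<le> W * halving_sum b (Suc n)"
  shows "Lp_norm p \<phi> \<le> ennreal (2 * W * h) * Lp_norm p u"
proof -
  define P where "P = enn2real p"
  define I where "I = (\<integral>\<^sup>+t. ennreal (norm (u t) powr P) \<partial>lebesgue_on {0..})"
  define J where "J = (\<integral>\<^sup>+t. ennreal (norm (\<phi> t) powr P) \<partial>lebesgue_on {0..})"
  define R where "R = (2 * W * h) powr P * enn2real I"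
  note u_facts = Lp_norm_finite_eq[OF u p, folded P_def, folded I_def]
  have P: "P \<ge> 1" by (rule u_facts(1))
  have meas: "(\<lambda>s. norm (u s)) \<in> borel_measurable (lebesgue_on {0..})"
    using u by (auto simp: Lp_def intro: measurable_compose[OF _ borel_measurable_norm])
  note blocks = Lp_integral_block_le[OF meas P u_facts(2)[unfolded I_def], folded I_def]
  have "integral {0..real N * h} (\<lambda>t. norm (\<phi> t) powr P) \<le> R" for N
  proof -
    have "integral {0..real N * h} (\<lambda>t. norm (\<phi> t) powr P)
        \<le> (2 * W * h) powr P * integral {0..real N * h} (\<lambda>s. norm (u s) powr P)"
      using P h W blocks(1,3) bound unfolding b_def
      by (intro integral_powr_le_of_block_bound continuous_intros cont) auto
    also have "\<dots> \<le> R" unfolding R_def by (intro mult_left_mono blocks(2)) auto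
    finally show ?thesis .
  qed
  moreover have "continuous_on {0..} (\<lambda>t. norm (\<phi> t) powr P)"
    using P by (intro continuous_on_powr' continuous_intros cont) auto
  ultimately have "J \<le> ennreal R"
    unfolding J_def by (intro nn_integral_halfline_le[OF _ _ h]) auto
  then have "J \<noteq> \<infinity>" and "enn2real J \<le> R"
    using enn2real_mono[of J "ennreal R"] by (auto simp: R_def top_unique)
  then have "Lp_norm p \<phi> = ennreal (enn2real J powr (1 / P))"
    using p(2) by (simp add: Lp_norm_def J_def P_def Let_def)
  also have "enn2real J powr (1 / P) \<le> R powr (1 / P)"
    using \<open>enn2real J \<le> R\<close> P by (intro powr_mono2) auto
  also have "R powr (1 / P) = 2 * W * h * enn2real I powr (1 / P)"
    using P W h by (simp add: R_def powr_mult powr_powr)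
  also have "ennreal \<dots> = ennreal (2 * W * h) * Lp_norm p u"
    using u_facts(3) W h by (simp add: ennreal_mult)
  finally show ?thesis by (simp add: ennreal_leI)
qed

lemma Lp_norm_le_of_block_bound:
  fixes u :: "real \<Rightarrow> 'a::real_normed_vector" and \<phi> :: "real \<Rightarrow> 'b::real_normed_vector" and h :: real
  defines "b \<equiv> \<lambda>k. integral {real k * h..real k * h + h} (\<lambda>s. norm (u s))"
  assumes u: "u \<in> Lp p" and p: "1 \<le> p" and cont: "continuous_on {0..} \<phi>"
    and h: "h > 0" and W: "W \<ge> 0"
    and bound: "\<And>n t. t \<in> {real n * h..real n * h + h} \<Longrightarrow> norm (\<phi> t) \<le> W * halving_sum b (Suc n)"
  shows "\<phi> \<in> Lp p \<and> Lp_norm p \<phi> \<le> ennreal (2 * W * h) * Lp_norm p u"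
proof -
  have meas: "\<phi> \<in> borel_measurable (lebesgue_on {0..})"
    by (rule continuous_imp_measurable_on_sets_lebesgue[OF cont]) simp
  have le: "Lp_norm p \<phi> \<le> ennreal (2 * W * h) * Lp_norm p u"
  proof (cases "p = \<infinity>")
    case True
    with u have "u \<in> Lp \<infinity>" by simp
    from Linf_norm_le_of_block_bound[OF this meas h W bound[unfolded b_def]] True show ?thesis by simp
  next
    case False
    from Lp_norm_le_of_block_bound_finite[OF u p False cont h W bound[unfolded b_def]] show ?thesis .
  qed
  also have "\<dots> < \<infinity>" using u by (simp add: Lp_def ennreal_mult_less_top)
  finally show ?thesis using le meas by (simp add: Lp_def)
qed

section \<open>The switched system\<close>

locale switched_system = exp_bounded_semigroup T K \<omega> for T :: "real \<Rightarrow> ('x::banach \<Rightarrow>\<^sub>L 'x)" and K \<omega> +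
  fixes f :: "'q \<Rightarrow> 'x \<Rightarrow> 'u::banach \<Rightarrow> 'x" and L :: real
  assumes L_pos: "L > 0"
    and lipschitz: "\<And>q. L-lipschitz_on UNIV (\<lambda>(x, v). f q x v)"
    and f_zero: "\<And>q. f q 0 0 = 0"
begin

lemma norm_f_diff_le: "norm (f q x v - f q y w) \<le> L * (norm (x - y) + norm (v - w))"
proof -
  have "dist (f q x v) (f q y w) \<le> L * dist (x, v) (y, w)"
    using lipschitz_onD[OF lipschitz, of "(x, v)" "(y, w)" q] by simp
  also have "\<dots> \<le> L * (norm (x - y) + norm (v - w))"
    using norm_Pair_le[of "x - y" "v - w"] L_pos by (simp add: dist_norm)
  finally show ?thesis by (simp add: dist_norm)
qed

lemma continuous_on_f_compose:
  assumes "continuous_on A \<psi>"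
  shows "continuous_on A (\<lambda>s. f q (\<psi> s) 0)"
proof -
  have "continuous_on A (\<lambda>s. (\<psi> s, 0::'u))" using assms by (intro continuous_on_Pair continuous_on_const)
  from continuous_on_compose2[OF lipschitz_on_continuous_on[OF lipschitz[of q]] this]
  show ?thesis by simp
qed

lemma integrable_convolution_f:
  assumes pc: "piecewise_constant \<sigma>" and \<psi>: "continuous_on {0..} \<psi>" and t: "0 \<le> t"
  shows "(\<lambda>s. T (t - s) (f (\<sigma> s) (\<psi> s) 0)) integrable_on {0..t}"
proof (rule integrable_on_piecewise_constant[where F = "\<lambda>q s. T (t - s) (f q (\<psi> s) 0)", OF pc order.refl])
  fix q
  show "continuous_on {0..t} (\<lambda>s. T (t - s) (f q (\<psi> s) 0))"
  proof (rule continuous_on_T_apply_compose)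
    show "continuous_on {0..t} (\<lambda>s. t - s)" by (intro continuous_intros)
    show "continuous_on {0..t} (\<lambda>s. f q (\<psi> s) 0)"
      by (rule continuous_on_f_compose[OF continuous_on_subset[OF \<psi>]]) auto
  qed simp
qed

lemma norm_convolution_exp_le:
  assumes t: "0 \<le> t" and \<beta>: "\<beta> > \<omega>" and c: "c \<ge> 0"
    and int: "(\<lambda>s. T (t - s) (H s)) integrable_on {0..t}"
    and H: "\<And>s. s \<in> {0..t} \<Longrightarrow> norm (H s) \<le> c * exp (\<beta> * s)"
  shows "norm (integral {0..t} (\<lambda>s. T (t - s) (H s))) \<le> K * c * exp (\<beta> * t) / (\<beta> - \<omega>)"
proof -
  have exp_int: "((\<lambda>s. K * c * exp (\<omega> * t) * exp ((\<beta> - \<omega>) * s)) has_integral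
      K * c * exp (\<omega> * t) * ((exp ((\<beta> - \<omega>) * t) - 1) / (\<beta> - \<omega>))) {0..t}"
    using \<beta> t by (intro has_integral_mult_right has_integral_exp_mult) auto
  have "norm (integral {0..t} (\<lambda>s. T (t - s) (H s)))
      \<le> integral {0..t} (\<lambda>s. K * c * exp (\<omega> * t) * exp ((\<beta> - \<omega>) * s))"
  proof (rule integral_norm_bound_integral[OF int has_integral_integrable[OF exp_int]])
    fix s assume s: "s \<in> {0..t}"
    have "norm (T (t - s) (H s)) \<le> norm (T (t - s)) * norm (H s)" by (rule norm_blinfun)
    also have "\<dots> \<le> (K * exp (\<omega> * (t - s))) * (c * exp (\<beta> * s))"
      using s norm_T_le[of "t - s"] H[OF s] K_ge_1 by (intro mult_mono) auto
    also have "\<dots> = K * c * exp (\<omega> * t) * exp ((\<beta> - \<omega>) * s)"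
      by (simp add: algebra_simps flip: exp_add)
    finally show "norm (T (t - s) (H s)) \<le> K * c * exp (\<omega> * t) * exp ((\<beta> - \<omega>) * s)" .
  qed
  also have "\<dots> = K * c * exp (\<omega> * t) * ((exp ((\<beta> - \<omega>) * t) - 1) / (\<beta> - \<omega>))"
    using exp_int by (rule integral_unique)
  also have "\<dots> \<le> K * c * exp (\<omega> * t) * (exp ((\<beta> - \<omega>) * t) / (\<beta> - \<omega>))"
    using K_ge_1 c \<beta> by (intro mult_left_mono divide_right_mono) auto
  also have "\<dots> = K * c * exp (\<beta> * t) / (\<beta> - \<omega>)"
    by (simp add: algebra_simps flip: exp_add)
  finally show ?thesis .
qed

lemma norm_convolution_f_diff_le:
  \<comment> \<open>\<open>\<beta>\<close> is chosen such that \<open>K L / (\<beta> - \<omega>) = 1/2\<close>.\<close>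
  defines "\<beta> \<equiv> \<omega> + 2 * K * L"
  assumes pc: "piecewise_constant \<sigma>"
    and \<psi>: "continuous_on {0..} \<psi>1" "continuous_on {0..} \<psi>2"
    and diff: "\<And>s. 0 \<le> s \<Longrightarrow> norm (\<psi>1 s - \<psi>2 s) \<le> r * exp (\<beta> * s)" and t: "0 \<le> t"
  shows "norm (integral {0..t} (\<lambda>s. T (t - s) (f (\<sigma> s) (\<psi>1 s) 0))
           - integral {0..t} (\<lambda>s. T (t - s) (f (\<sigma> s) (\<psi>2 s) 0))) \<le> r / 2 * exp (\<beta> * t)"
proof -
  define H where "H s = f (\<sigma> s) (\<psi>1 s) 0 - f (\<sigma> s) (\<psi>2 s) 0" for s
  have int: "(\<lambda>s. T (t - s) (f (\<sigma> s) (\<psi>i s) 0)) integrable_on {0..t}"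
    if "continuous_on {0..} \<psi>i" for \<psi>i
    using pc that t by (rule integrable_convolution_f)
  have "0 \<le> r * exp (\<beta> * 0)" using diff[of 0] norm_ge_zero order_trans by blast
  then have "0 \<le> r" by simp
  have H_le: "norm (H s) \<le> (L * r) * exp (\<beta> * s)" if "s \<in> {0..t}" for s
  proof -
    have "norm (H s) \<le> L * norm (\<psi>1 s - \<psi>2 s)"
      using norm_f_diff_le[of "\<sigma> s" "\<psi>1 s" 0 "\<psi>2 s" 0] by (simp add: H_def)
    also have "\<dots> \<le> L * (r * exp (\<beta> * s))" using diff[of s] that L_pos by (intro mult_left_mono) auto
    finally show ?thesis by (simp add: mult.assoc)
  qed
  have H_int: "(\<lambda>s. T (t - s) (H s)) integrable_on {0..t}"
    unfolding H_def blinfun.diff_right by (intro integrable_diff int \<psi>)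
  have "\<beta> > \<omega>" using K_ge_1 L_pos by (simp add: \<beta>_def)
  then have "norm (integral {0..t} (\<lambda>s. T (t - s) (H s))) \<le> K * (L * r) * exp (\<beta> * t) / (\<beta> - \<omega>)"
    using t L_pos \<open>0 \<le> r\<close> by (intro norm_convolution_exp_le H_int H_le) auto
  also have "\<dots> = r / 2 * exp (\<beta> * t)" using K_ge_1 L_pos by (simp add: \<beta>_def)
  also have "integral {0..t} (\<lambda>s. T (t - s) (H s))
      = integral {0..t} (\<lambda>s. T (t - s) (f (\<sigma> s) (\<psi>1 s) 0))
        - integral {0..t} (\<lambda>s. T (t - s) (f (\<sigma> s) (\<psi>2 s) 0))"
    unfolding H_def blinfun.diff_right by (intro integral_diff int \<psi>)
  finally show ?thesis .
qed

lemma continuous_on_convolution_f: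
  assumes pc: "piecewise_constant \<sigma>" and cont: "continuous_on {0..} \<psi>"
  shows "continuous_on {0..} (\<lambda>t. integral {0..t} (\<lambda>s. T (t - s) (f (\<sigma> s) (\<psi> s) 0)))"
proof (rule continuous_on_convolution)
  show "(\<lambda>s. T (t - s) (f (\<sigma> s) (\<psi> s) 0)) integrable_on {0..t}" if "0 \<le> t" for t
    using pc cont that by (rule integrable_convolution_f)
  fix N
  have "continuous_on {0..N} \<psi>" using cont by (rule continuous_on_subset) auto
  then have "bounded (\<psi> ` {0..N})" by (intro compact_imp_bounded compact_continuous_image) auto
  then obtain b where b: "\<forall>s\<in>{0..N}. norm (\<psi> s) \<le> b" unfolding bounded_iff by blast
  have "norm (f (\<sigma> s) (\<psi> s) 0) \<le> L * b" if "s \<in> {0..N}" for s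
  proof -
    have "norm (f (\<sigma> s) (\<psi> s) 0) \<le> L * norm (\<psi> s)"
      using norm_f_diff_le[of "\<sigma> s" "\<psi> s" 0 0 0] by (simp add: f_zero)
    also have "\<dots> \<le> L * b" using b that L_pos by (intro mult_left_mono) auto
    finally show ?thesis .
  qed
  then show "bounded ((\<lambda>s. f (\<sigma> s) (\<psi> s) 0) ` {0..N})"
    unfolding bounded_iff by blast
qed

lemma unforced_mild_solution_exists:
  assumes pc: "piecewise_constant \<sigma>"
  shows "\<exists>\<psi>. mild_solution T f \<sigma> (\<lambda>_. 0) x \<psi>"
proof -
  define \<beta> where "\<beta> = \<omega> + 2 * K * L"
  define X where "X = {\<psi> :: real \<Rightarrow> 'x. continuous_on {0..} \<psi> \<and> (\<exists>r. \<forall>t\<ge>0. norm (\<psi> t) \<le> r * exp (\<beta> * t))}"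
  define conv where "conv \<psi> t = integral {0..t} (\<lambda>s. T (t - s) (f (\<sigma> s) (\<psi> s) 0))" for \<psi> t
  have conv_diff: "norm (conv \<psi>1 t - conv \<psi>2 t) \<le> r / 2 * exp (\<beta> * t)"
    if "\<psi>1 \<in> X" "\<psi>2 \<in> X" "\<forall>t\<ge>0. norm (\<psi>1 t - \<psi>2 t) \<le> r * exp (\<beta> * t)" "0 \<le> t" for \<psi>1 \<psi>2 r t
    using that unfolding conv_def \<beta>_def X_def by (intro norm_convolution_f_diff_le pc) auto
  have "\<exists>\<psi>\<in>X. \<forall>t\<ge>0. T t x + conv \<psi> t = \<psi> t"
    unfolding X_def
  proof (rule exp_weighted_fixed_point, fold X_def)
    fix \<psi> assume \<psi>: "\<psi> \<in> X"
    then obtain r where r: "\<forall>t\<ge>0. norm (\<psi> t) \<le> r * exp (\<beta> * t)" and cont: "continuous_on {0..} \<psi>"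
      by (auto simp: X_def)
    have "(\<lambda>_. 0) \<in> X"
      unfolding X_def using exI[of "\<lambda>r. \<forall>t\<ge>0. norm (0::'x) \<le> r * exp (\<beta> * t)" 0] by simp
    then have conv_le: "norm (conv \<psi> t) \<le> r / 2 * exp (\<beta> * t)" if "0 \<le> t" for t
      using conv_diff[OF \<psi>, of "\<lambda>_. 0" r] r that by (simp add: conv_def f_zero)
    have "norm (T t x + conv \<psi> t) \<le> (K * norm x + r / 2) * exp (\<beta> * t)" if "0 \<le> t" for t
    proof -
      have "exp (\<omega> * t) \<le> exp (\<beta> * t)"
        using that K_ge_1 L_pos by (simp add: \<beta>_def mult_right_mono)
      have "norm (T t x) \<le> K * exp (\<omega> * t) * norm x" using that by (intro norm_T_apply_le) auto
      also have "\<dots> \<le> K * exp (\<beta> * t) * norm x"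
        using \<open>exp (\<omega> * t) \<le> exp (\<beta> * t)\<close> K_ge_1 by (intro mult_right_mono mult_left_mono) auto
      finally have "norm (T t x) + norm (conv \<psi> t) \<le> (K * norm x + r / 2) * exp (\<beta> * t)"
        using conv_le[OF that] by (simp add: algebra_simps)
      then show ?thesis using norm_triangle_ineq[of "T t x" "conv \<psi> t"] by linarith
    qed
    moreover have "continuous_on {0..} (\<lambda>t. T t x + conv \<psi> t)"
      unfolding conv_def by (intro continuous_on_add continuous_on_T_apply continuous_on_convolution_f pc cont)
    ultimately show "(\<lambda>t. T t x + conv \<psi> t) \<in> X" by (auto simp: X_def)
  next
    fix \<psi>1 \<psi>2 r assume "\<psi>1 \<in> X" "\<psi>2 \<in> X" "\<forall>t\<ge>0. norm (\<psi>1 t - \<psi>2 t) \<le> r * exp (\<beta> * t)"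
    then show "\<forall>t\<ge>0. norm (T t x + conv \<psi>1 t - (T t x + conv \<psi>2 t)) \<le> r / 2 * exp (\<beta> * t)"
      using conv_diff by simp
  qed
  then obtain \<psi> where \<psi>: "continuous_on {0..} \<psi>" and fixed: "\<And>t. 0 \<le> t \<Longrightarrow> \<psi> t = T t x + conv \<psi> t"
    by (auto simp: X_def)
  have "mild_solution T f \<sigma> (\<lambda>_. 0) x \<psi>"
    unfolding mild_solution_def
  proof (intro conjI allI impI \<psi>)
    fix t :: real assume t: "0 \<le> t"
    show "((\<lambda>s. T (t - s) (f (\<sigma> s) (\<psi> s) 0)) has_integral (\<psi> t - T t x)) {0..t}"
      using integrable_integral[OF integrable_convolution_f[OF pc \<psi> t]] fixed[OF t]
      by (simp add: conv_def)
  qed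
  then show ?thesis by blast
qed

definition input_gain :: "real \<Rightarrow> real" where
  "input_gain h = 2 * (K * exp (\<omega> * h) * L) * exp (2 * (K * exp (\<omega> * h) * L) * h)"

lemma input_gain_pos: "input_gain h > 0"
  using K_ge_1 L_pos by (simp add: input_gain_def)

lemma mild_solutions_diff_le:
  assumes \<phi>: "mild_solution T f \<sigma> u x0 \<phi>" and \<psi>: "mild_solution T f \<sigma> v x0 \<psi>"
    and t: "0 \<le> t" "t \<le> h" and int: "(\<lambda>s. norm (u s - v s)) integrable_on {0..t}"
  shows "norm (\<phi> t - \<psi> t) \<le> K * exp (\<omega> * h) * L *
           (integral {0..t} (\<lambda>s. norm (\<phi> s - \<psi> s)) + integral {0..t} (\<lambda>s. norm (u s - v s)))"
proof -
  define c where "c = K * exp (\<omega> * h) * L"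
  define H where "H s = f (\<sigma> s) (\<phi> s) (u s) - f (\<sigma> s) (\<psi> s) (v s)" for s
  have "((\<lambda>s. T (t - s) (f (\<sigma> s) (\<phi> s) (u s)) - T (t - s) (f (\<sigma> s) (\<psi> s) (v s))) has_integral
      ((\<phi> t - T t x0) - (\<psi> t - T t x0))) {0..t}"
    using \<phi> \<psi> t by (intro has_integral_diff) (auto simp: mild_solution_def)
  then have H_int: "((\<lambda>s. T (t - s) (H s)) has_integral (\<phi> t - \<psi> t)) {0..t}"
    by (simp add: H_def blinfun.diff_right)
  have "continuous_on {0..} (\<lambda>s. norm (\<phi> s - \<psi> s))"
    using \<phi> \<psi> by (intro continuous_intros) (auto simp: mild_solution_def)
  then have diff_int: "(\<lambda>s. norm (\<phi> s - \<psi> s)) integrable_on {0..t}"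
    by (rule integrable_continuous_interval[OF continuous_on_subset]) auto
  have "norm (integral {0..t} (\<lambda>s. T (t - s) (H s)))
      \<le> integral {0..t} (\<lambda>s. c * (norm (\<phi> s - \<psi> s) + norm (u s - v s)))"
  proof (rule integral_norm_bound_integral)
    show "(\<lambda>s. T (t - s) (H s)) integrable_on {0..t}" using H_int by blast
    show "(\<lambda>s. c * (norm (\<phi> s - \<psi> s) + norm (u s - v s))) integrable_on {0..t}"
      using integrable_on_cmult_left[OF integrable_add[OF diff_int int], of c] by simp
    fix s assume s: "s \<in> {0..t}"
    have "norm (T (t - s) (H s)) \<le> K * exp (\<omega> * h) * norm (H s)"
      using s t by (intro norm_T_apply_le) auto
    also have "\<dots> \<le> K * exp (\<omega> * h) * (L * (norm (\<phi> s - \<psi> s) + norm (u s - v s)))"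
      unfolding H_def using K_ge_1 by (intro mult_left_mono norm_f_diff_le) auto
    finally show "norm (T (t - s) (H s)) \<le> c * (norm (\<phi> s - \<psi> s) + norm (u s - v s))"
      by (simp add: c_def mult.assoc)
  qed
  also have "\<dots> = c * (integral {0..t} (\<lambda>s. norm (\<phi> s - \<psi> s)) + integral {0..t} (\<lambda>s. norm (u s - v s)))"
    by (simp add: integral_add[OF diff_int int])
  finally show ?thesis using integral_unique[OF H_int] by (simp add: c_def)
qed

lemma mild_solution_dist_unforced_le:
  assumes \<phi>: "mild_solution T f \<sigma> u x0 \<phi>" and \<psi>: "mild_solution T f \<sigma> (\<lambda>_. 0) x0 \<psi>"
    and int: "(\<lambda>s. norm (u s)) integrable_on {0..h}" and \<tau>: "\<tau> \<in> {0..h}"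
  shows "norm (\<phi> \<tau> - \<psi> \<tau>) \<le> input_gain h * integral {0..h} (\<lambda>s. norm (u s))"
proof -
  define c where "c = K * exp (\<omega> * h) * L"
  define U where "U = integral {0..h} (\<lambda>s. norm (u s))"
  have "c > 0" using K_ge_1 L_pos by (simp add: c_def)
  have "U \<ge> 0" unfolding U_def by (rule integral_nonneg[OF int]) auto
  have "norm (\<phi> \<tau> - \<psi> \<tau>) \<le> 2 * (c * U) * exp (2 * c * \<tau>)"
  proof (rule gronwall_exp_bound[where D = "\<lambda>s. norm (\<phi> s - \<psi> s)"])
    have "continuous_on {0..} (\<lambda>s. norm (\<phi> s - \<psi> s))"
      using \<phi> \<psi> by (intro continuous_intros) (auto simp: mild_solution_def)
    then show "continuous_on {0..h} (\<lambda>s. norm (\<phi> s - \<psi> s))"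
      by (rule continuous_on_subset) auto
    fix t assume t: "t \<in> {0..h}"
    have int_t: "(\<lambda>s. norm (u s)) integrable_on {0..t}"
      using t by (intro integrable_subinterval_real[OF int]) auto
    have "integral {0..t} (\<lambda>s. norm (u s)) \<le> U"
      unfolding U_def using t by (intro integral_subset_le[OF _ int_t int]) auto
    have "norm (\<phi> t - \<psi> t)
        \<le> c * (integral {0..t} (\<lambda>s. norm (\<phi> s - \<psi> s)) + integral {0..t} (\<lambda>s. norm (u s)))"
      using mild_solutions_diff_le[OF \<phi> \<psi>, of t h] t int_t by (simp add: c_def)
    also have "\<dots> \<le> c * (integral {0..t} (\<lambda>s. norm (\<phi> s - \<psi> s)) + U)"
      using \<open>integral {0..t} (\<lambda>s. norm (u s)) \<le> U\<close> \<open>c > 0\<close> by (intro mult_left_mono) auto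
    finally show "norm (\<phi> t - \<psi> t) \<le> c * U + c * integral {0..t} (\<lambda>s. norm (\<phi> s - \<psi> s))"
      by (simp add: algebra_simps)
  qed (use \<tau> \<open>c > 0\<close> \<open>U \<ge> 0\<close> in simp_all)
  also have "\<dots> \<le> 2 * (c * U) * exp (2 * c * h)"
    using \<tau> \<open>c > 0\<close> \<open>U \<ge> 0\<close> by (intro mult_left_mono) auto
  finally show ?thesis by (simp add: input_gain_def c_def U_def algebra_simps)
qed

definition unforced_exp_decay :: "real \<Rightarrow> real \<Rightarrow> bool" where
  "unforced_exp_decay M lam \<longleftrightarrow> (\<forall>\<sigma>\<in>PC. \<forall>x \<psi>. mild_solution T f \<sigma> (\<lambda>_. 0) x \<psi> \<longrightarrow>
     (\<forall>t\<ge>0. norm (\<psi> t) \<le> M * exp (- lam * t) * norm x))"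

lemma mild_solution_step_le:
  assumes uges: "unforced_exp_decay M lam"
    and \<sigma>: "\<sigma> \<in> PC" and \<phi>: "mild_solution T f \<sigma> u x0 \<phi>" and t0: "0 \<le> t0"
    and int: "(\<lambda>s. norm (u s)) integrable_on {t0..t0 + h}" and \<tau>: "\<tau> \<in> {0..h}"
  shows "norm (\<phi> (t0 + \<tau>)) \<le> M * exp (- lam * \<tau>) * norm (\<phi> t0)
           + input_gain h * integral {t0..t0 + h} (\<lambda>s. norm (u s))"
proof -
  let ?\<sigma> = "\<lambda>s. \<sigma> (t0 + s)"
  have pc: "?\<sigma> \<in> PC" using piecewise_constant_shift[of \<sigma> t0] \<sigma> t0 by (simp add: PC_def)
  then obtain \<psi> where \<psi>: "mild_solution T f ?\<sigma> (\<lambda>_. 0) (\<phi> t0) \<psi>"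
    using unforced_mild_solution_exists by (auto simp: PC_def)
  have int_shift: "((\<lambda>s. norm (u (t0 + s))) has_integral integral {t0..t0 + h} (\<lambda>s. norm (u s))) {0..h}"
    using has_integral_shift_real_ivl[OF integrable_integral[OF int], of t0] by (simp add: add.commute)
  have "norm (\<phi> (t0 + \<tau>) - \<psi> \<tau>) \<le> input_gain h * integral {t0..t0 + h} (\<lambda>s. norm (u s))"
    using mild_solution_dist_unforced_le[OF mild_solution_shift[OF \<phi> t0] \<psi> _ \<tau>] int_shift
    by (metis has_integral_integrable integral_unique)
  moreover have "norm (\<psi> \<tau>) \<le> M * exp (- lam * \<tau>) * norm (\<phi> t0)"
    using uges pc \<psi> \<tau> by (auto simp: unforced_exp_decay_def)
  ultimately show ?thesis using norm_triangle_ineq[of "\<psi> \<tau>" "\<phi> (t0 + \<tau>) - \<psi> \<tau>"] by simp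
qed

lemma zero_state_response_block_le:
  fixes u :: "real \<Rightarrow> 'u" and h :: real
  defines "b \<equiv> \<lambda>k. integral {real k * h..real k * h + h} (\<lambda>s. norm (u s))"
  assumes uges: "unforced_exp_decay M lam"
    and M: "M > 0" and lam: "lam > 0" and h: "h > 0" and half: "M * exp (- lam * h) \<le> 1/2"
    and \<sigma>: "\<sigma> \<in> PC" and \<phi>: "mild_solution T f \<sigma> u 0 \<phi>"
    and int: "\<And>a b. 0 \<le> a \<Longrightarrow> (\<lambda>s. norm (u s)) integrable_on {a..b}"
    and t: "t \<in> {real n * h..real n * h + h}"
  shows "norm (\<phi> t) \<le> 2 * (M + 1) * input_gain h * halving_sum b (Suc n)"
proof -
  have b: "0 \<le> b k" for k unfolding b_def using h by (intro integral_nonneg int) auto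
  have step: "norm (\<phi> (real k * h + \<tau>)) \<le> M * exp (- lam * \<tau>) * norm (\<phi> (real k * h)) + input_gain h * b k"
    if "\<tau> \<in> {0..h}" for k \<tau>
    unfolding b_def using h that by (intro mild_solution_step_le[OF uges \<sigma> \<phi>] int) auto
  have grid: "norm (\<phi> (real k * h)) \<le> input_gain h * halving_sum b k" for k
  proof (induction k)
    case 0
    then show ?case using mild_solution_initial_value[OF \<phi>] by simp
  next
    case (Suc k)
    have "norm (\<phi> (real (Suc k) * h)) \<le> M * exp (- lam * h) * norm (\<phi> (real k * h)) + input_gain h * b k"
      using step[of h k] h by (simp add: distrib_right add.commute)
    also have "\<dots> \<le> 1/2 * (input_gain h * halving_sum b k) + input_gain h * b k"
      using half Suc.IH by (intro add_right_mono mult_mono) auto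
    finally show ?case by (simp add: algebra_simps)
  qed
  define \<tau> where "\<tau> = t - real n * h"
  have \<tau>: "\<tau> \<in> {0..h}" "t = real n * h + \<tau>" using t by (auto simp: \<tau>_def)
  have "norm (\<phi> t) \<le> M * exp (- lam * \<tau>) * norm (\<phi> (real n * h)) + input_gain h * b n"
    using step[OF \<tau>(1)] \<tau>(2) by simp
  also have "\<dots> \<le> M * (input_gain h * halving_sum b n) + input_gain h * b n"
    using M lam \<tau>(1) grid[of n] by (intro add_right_mono mult_mono) auto
  also have "\<dots> \<le> 2 * (M + 1) * input_gain h * halving_sum b (Suc n)"
    using M b[of n] halving_sum_nonneg[of b n, OF b] input_gain_pos[of h]
    by (simp add: algebra_simps mult_left_mono)
  finally show ?thesis .
qed

lemma zero_state_response_Lp_le: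
  assumes uges: "unforced_exp_decay M lam"
    and M: "M > 0" and lam: "lam > 0" and h: "h > 0" and half: "M * exp (- lam * h) \<le> 1/2"
    and p: "1 \<le> p" and \<sigma>: "\<sigma> \<in> PC" and u: "u \<in> Lp p" and \<phi>: "mild_solution T f \<sigma> u 0 \<phi>"
  shows "\<phi> \<in> Lp p \<and> Lp_norm p \<phi> \<le> ennreal (2 * (2 * (M + 1) * input_gain h) * h) * Lp_norm p u"
proof (rule Lp_norm_le_of_block_bound[OF u p _ h])
  show "continuous_on {0..} \<phi>" using \<phi> by (simp add: mild_solution_def)
  show "0 \<le> 2 * (M + 1) * input_gain h" using M input_gain_pos[of h] by simp
  have "\<And>a b. 0 \<le> a \<Longrightarrow> (\<lambda>s. norm (u s)) integrable_on {a..b}"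
    using u p by (rule Lp_locally_integrable)
  then show "norm (\<phi> t) \<le> 2 * (M + 1) * input_gain h *
      halving_sum (\<lambda>k. integral {real k * h..real k * h + h} (\<lambda>s. norm (u s))) (Suc n)"
    if "t \<in> {real n * h..real n * h + h}" for n t
    using zero_state_response_block_le[OF uges M lam h half \<sigma> \<phi> _ that] by blast
qed

end

lemma exp_decay_below_half:
  fixes M lam :: real
  assumes M: "M > 0" and lam: "lam > 0"
  shows "\<exists>h>0. M * exp (- lam * h) \<le> 1/2"
proof (intro exI conjI)
  define h where "h = max 1 (ln (2 * M) / lam)"
  show "h > 0" by (simp add: h_def)
  have "lam * (ln (2 * M) / lam) \<le> lam * h" using lam by (intro mult_left_mono) (auto simp: h_def)
  then have "ln (2 * M) \<le> lam * h" using lam by simp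
  then have "exp (- lam * h) \<le> exp (- ln (2 * M))" by simp
  also have "\<dots> = 1 / (2 * M)" using M by (simp add: exp_minus inverse_eq_divide)
  finally show "M * exp (- lam * h) \<le> 1/2" using M by (simp add: field_simps)
qed

theorem theorem9:
  fixes T :: "real \<Rightarrow> ('x::banach \<Rightarrow>\<^sub>L 'x)"
    and f :: "'q \<Rightarrow> 'x \<Rightarrow> 'u::banach \<Rightarrow> 'x"
    and L :: real
  assumes semigroup: "C0_semigroup T"
    and L_pos: "L > 0"
    and lipschitz: "\<And>q. L-lipschitz_on UNIV (\<lambda>(x, v). f q x v)"
    and f_zero: "\<And>q. f q 0 0 = 0"
    and uges: "UGES T f"
  shows "\<forall>p::ennreal. 1 \<le> p \<longrightarrow>
           (\<exists>c>0. \<forall>\<sigma>\<in>PC. \<forall>u\<in>Lp p. \<forall>\<phi>. mild_solution T f \<sigma> u 0 \<phi> \<longrightarrow>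
               \<phi> \<in> Lp p \<and> Lp_norm p \<phi> \<le> ennreal c * Lp_norm p u)"
proof (intro allI impI)
  fix p :: ennreal assume p: "1 \<le> p"
  obtain K \<omega> where "K \<ge> 1" "\<omega> \<ge> 0" "\<forall>t\<ge>0. norm (T t) \<le> K * exp (\<omega> * t)"
    using C0_semigroup_exp_bound[OF semigroup] by blast
  then interpret switched_system T K \<omega> f L
    using semigroup L_pos lipschitz f_zero by unfold_locales auto
  obtain M lam where M: "M > 0" and lam: "lam > 0" and decay: "unforced_exp_decay M lam"
    using uges unfolding UGES_def unforced_exp_decay_def by blast
  obtain h where h: "h > 0" and half: "M * exp (- lam * h) \<le> 1/2"
    using exp_decay_below_half[OF M lam] by blast
  have "2 * (2 * (M + 1) * input_gain h) * h > 0" using M h input_gain_pos[of h] by simp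
  then show "\<exists>c>0. \<forall>\<sigma>\<in>PC. \<forall>u\<in>Lp p. \<forall>\<phi>. mild_solution T f \<sigma> u 0 \<phi> \<longrightarrow>
      \<phi> \<in> Lp p \<and> Lp_norm p \<phi> \<le> ennreal c * Lp_norm p u"
    using zero_state_response_Lp_le[OF decay M lam h half p] by blast
qed

end
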